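(* Let $m\ge 0$ and let $a_0,\dots,a_m\in\mathcal{C}^\infty_b(\mathbb{T}^2)$, where $\mathbb{T}^2=\mathbb{R}^2/\mathbb{Z}^2$ and each $a_k$ is identified with a $\mathbb{Z}^2$-periodic smooth function on $\mathbb{R}^2$ with bounded derivatives. For $\vartheta\in\mathbb{R}$ define the differential operator on $\mathbb{R}$ $$A_\vartheta=\sum_{k=0}^m a_k(x,\vartheta x)\frac{d^k}{dx^k},$$ and assume these operators are self-adjoint and elliptic on $L^2(\mathbb{R})$. Let $\theta\in\mathbb{R}$ and let $(\theta_n)_{n\in\mathbb{N}}$ be a sequence of real numbers with $\theta_n\to\theta$. Then $$\lim_{n\to\infty}\big\lVert (A_\theta-A_{\theta_n})f\big\rVert_{L^2(\mathbb{R})}=0\quad\text{for all } f\in H^m(\mathbb{R}).$$ In particular, the sequence of spectra $\sigma(A_{\theta_n})$ is spectrally inclusive: for every $\lambda\in\sigma(A_\theta)$ there exists a sequence $\lambda_n\in\sigma(A_{\theta_n})$ with $\lambda_n\to\lambda$.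
   Context: $\sigma(\cdot)$ denotes the spectrum of the operator acting on $L^2(\mathbb{R})$. $H^m(\mathbb{R})$ is the standard Sobolev space. *)

theory Defs
  imports "HOL-Analysis.Analysis"
begin

text \<open>F i j is the partial derivative of order (i,j); all of them exist (Frechet), and are bounded.\<close>
definition smooth_bounded_periodic :: "(real \<times> real \<Rightarrow> complex) \<Rightarrow> bool" where
  "smooth_bounded_periodic a \<longleftrightarrow>
     (\<exists>F :: nat \<Rightarrow> nat \<Rightarrow> real \<times> real \<Rightarrow> complex.
        F 0 0 = a \<and>
        (\<forall>i j p. (F i j has_derivative
                   (\<lambda>h. fst h *\<^sub>R F (Suc i) j p + snd h *\<^sub>R F i (Suc j) p)) (at p)) \<and>
        (\<forall>i j. bounded (range (F i j)))) \<and>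
     (\<forall>x y. a (x + 1, y) = a (x, y) \<and> a (x, y + 1) = a (x, y))"

definition L2 :: "(real \<Rightarrow> complex) \<Rightarrow> bool" where
  "L2 f \<longleftrightarrow> f \<in> borel_measurable lborel \<and> integrable lborel (\<lambda>x. (cmod (f x))\<^sup>2)"

definition L2_norm :: "(real \<Rightarrow> complex) \<Rightarrow> real" where
  "L2_norm f = sqrt (LINT x|lborel. (cmod (f x))\<^sup>2)"

definition L2_inner :: "(real \<Rightarrow> complex) \<Rightarrow> (real \<Rightarrow> complex) \<Rightarrow> complex" where
  "L2_inner f g = (LINT x|lborel. f x * cnj (g x))"

text \<open>Test functions: smooth, compactly supported; Phi k is the k-th derivative.\<close>
definition test_function :: "(nat \<Rightarrow> real \<Rightarrow> real) \<Rightarrow> bool" where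
  "test_function Phi \<longleftrightarrow>
     (\<forall>k x. (Phi k has_real_derivative Phi (Suc k) x) (at x)) \<and>
     (\<exists>R. \<forall>x. \<bar>x\<bar> > R \<longrightarrow> Phi 0 x = 0)"

text \<open>sobolev m f D: f is in H^m(R), and D k (k \<le> m) is its k-th weak derivative (D 0 = f).\<close>
definition sobolev :: "nat \<Rightarrow> (real \<Rightarrow> complex) \<Rightarrow> (nat \<Rightarrow> real \<Rightarrow> complex) \<Rightarrow> bool" where
  "sobolev m f D \<longleftrightarrow>
     D 0 = f \<and> (\<forall>k\<le>m. L2 (D k)) \<and>
     (\<forall>Phi. test_function Phi \<longrightarrow>
        (\<forall>k\<le>m. (LINT x|lborel. f x * complex_of_real (Phi k x))
                 = (-1) ^ k * (LINT x|lborel. D k x * complex_of_real (Phi 0 x))))"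

definition opA :: "(nat \<Rightarrow> real \<times> real \<Rightarrow> complex) \<Rightarrow> nat \<Rightarrow> real \<Rightarrow> (nat \<Rightarrow> real \<Rightarrow> complex)
                   \<Rightarrow> real \<Rightarrow> complex" where
  "opA a m \<theta> D x = (\<Sum>k\<le>m. a k (x, \<theta> * x) * D k x)"

text \<open>Self-adjointness of A_theta with domain H^m(R) in L^2(R): symmetric, and the adjoint's
  domain is contained in H^m(R).\<close>
definition self_adjoint_op :: "(nat \<Rightarrow> real \<times> real \<Rightarrow> complex) \<Rightarrow> nat \<Rightarrow> real \<Rightarrow> bool" where
  "self_adjoint_op a m \<theta> \<longleftrightarrow>
     (\<forall>f Df g Dg. sobolev m f Df \<longrightarrow> sobolev m g Dg \<longrightarrow>
        L2_inner (opA a m \<theta> Df) g = L2_inner f (opA a m \<theta> Dg)) \<and>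
     (\<forall>g h. L2 g \<longrightarrow> L2 h \<longrightarrow>
        (\<forall>f Df. sobolev m f Df \<longrightarrow> L2_inner (opA a m \<theta> Df) g = L2_inner f h) \<longrightarrow>
        (\<exists>Dg. sobolev m g Dg))"

definition elliptic_op :: "(nat \<Rightarrow> real \<times> real \<Rightarrow> complex) \<Rightarrow> nat \<Rightarrow> bool" where
  "elliptic_op a m \<longleftrightarrow> (\<forall>p. a m p \<noteq> 0)"

text \<open>Resolvent set: A_theta - lambda : H^m \<rightarrow> L^2 is bijective (modulo a.e. equality)
  with bounded inverse.\<close>
definition resolvent_set_op :: "(nat \<Rightarrow> real \<times> real \<Rightarrow> complex) \<Rightarrow> nat \<Rightarrow> real \<Rightarrow> complex set" where
  "resolvent_set_op a m \<theta> =
     {\<mu>. (\<forall>g. L2 g \<longrightarrow> (\<exists>f Df. sobolev m f Df \<and>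
              (AE x in lborel. opA a m \<theta> Df x - \<mu> * f x = g x))) \<and>
         (\<exists>C. \<forall>f Df. sobolev m f Df \<longrightarrow>
              L2_norm f \<le> C * L2_norm (\<lambda>x. opA a m \<theta> Df x - \<mu> * f x))}"

definition spectrum_op :: "(nat \<Rightarrow> real \<times> real \<Rightarrow> complex) \<Rightarrow> nat \<Rightarrow> real \<Rightarrow> complex set" where
  "spectrum_op a m \<theta> = - resolvent_set_op a m \<theta>"

end

theory Submission
  imports Defs "HOL-Computational_Algebra.Polynomial"
begin

text \<open>Strong convergence is dominated convergence: pointwise, \<open>a\<^sub>k(x, \<theta>\<^sub>n x) \<rightarrow> a\<^sub>k(x, \<theta> x)\<close> by
  continuity, with the bounded coefficients giving a square integrable majorant.

  Spectral inclusion uses self-adjointness. A point \<open>\<mu>\<close> of \<open>\<sigma>(A\<^sub>\<theta>)\<close> is real and an approximate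
  eigenvalue; by strong convergence an approximate eigenvector for \<open>A\<^sub>\<theta>\<close> is one for \<open>A\<^sub>\<theta>\<^sub>n\<close>, \<open>n\<close>
  large. For self-adjoint \<open>A\<close> and real \<open>\<mu>\<close>, \<open>\<parallel>(A - \<mu>) f\<parallel> < \<delta> \<parallel>f\<parallel>\<close> puts spectrum within \<open>\<delta>\<close> of \<open>\<mu>\<close>:
  if \<open>\<mu>\<close> is not itself in it, \<open>R = (A - \<mu>)\<^sup>-\<^sup>1\<close> is bounded with \<open>\<parallel>R\<parallel> > 1/\<delta>\<close>; being self-adjoint, \<open>R\<close> has norm equal to
  its numerical radius, so \<open>\<plusminus>\<parallel>R\<parallel>\<close> is an approximate eigenvalue of \<open>R\<close> and \<open>\<mu> \<plusminus> 1/\<parallel>R\<parallel>\<close> one of \<open>A\<close>.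
  Behind this are completeness of \<open>L\<^sup>2\<close>, density of \<open>H\<^sup>m\<close>, and surjectivity of \<open>A - z\<close> for
  nonreal \<open>z\<close>, which follows from closedness of the graph.\<close>

section \<open>The space \<open>L\<^sup>2(\<real>)\<close>\<close>

lemma L2_borel_measurable: "L2 f \<Longrightarrow> f \<in> borel_measurable borel"
  by (simp add: L2_def)

lemma L2_integrable_square: "L2 f \<Longrightarrow> integrable lborel (\<lambda>x. (cmod (f x))\<^sup>2)"
  by (simp add: L2_def)

lemma L2_integrable_mult:
  assumes "L2 f" "L2 g"
  shows "integrable lborel (\<lambda>x. f x * g x)"
proof (rule Bochner_Integration.integrable_bound[where f="\<lambda>x. ((cmod (f x))\<^sup>2 + (cmod (g x))\<^sup>2)"])
  show "integrable lborel (\<lambda>x. ((cmod (f x))\<^sup>2 + (cmod (g x))\<^sup>2))"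
    using L2_integrable_square[OF assms(1)] L2_integrable_square[OF assms(2)] by auto
  show "(\<lambda>x. f x * g x) \<in> borel_measurable lborel" using L2_borel_measurable[OF assms(1)] L2_borel_measurable[OF assms(2)] by simp
  show "AE x in lborel. norm (f x * g x) \<le> norm (((cmod (f x))\<^sup>2 + (cmod (g x))\<^sup>2))"
  proof (rule AE_I2)
    fix x
    have "cmod (f x) * cmod (g x) \<le> (cmod (f x))\<^sup>2 + (cmod (g x))\<^sup>2"
      using sum_squares_bound[of "cmod (f x)" "cmod (g x)"] mult_nonneg_nonneg[OF norm_ge_zero norm_ge_zero, of "f x" "g x"] by linarith
    then show "norm (f x * g x) \<le> norm (((cmod (f x))\<^sup>2 + (cmod (g x))\<^sup>2))"
      by (simp add: norm_mult)
  qed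
qed

lemma L2_cnj: "L2 f \<Longrightarrow> L2 (\<lambda>x. cnj (f x))"
  unfolding L2_def by (auto intro: measurable_compose[OF _ borel_measurable_continuous_onI[OF continuous_on_cnj]])

lemma L2_integrable_inner: "L2 f \<Longrightarrow> L2 g \<Longrightarrow> integrable lborel (\<lambda>x. f x * cnj (g x))"
  using L2_integrable_mult L2_cnj by blast

lemma L2_add: assumes "L2 f" "L2 g" shows "L2 (\<lambda>x. f x + g x)"
  unfolding L2_def
proof
  show "(\<lambda>x. f x + g x) \<in> borel_measurable lborel" using L2_borel_measurable[OF assms(1)] L2_borel_measurable[OF assms(2)] by simp
  show "integrable lborel (\<lambda>x. (cmod (f x + g x))\<^sup>2)"
  proof (rule Bochner_Integration.integrable_bound[where f="\<lambda>x. 2 * (cmod (f x))\<^sup>2 + 2 * (cmod (g x))\<^sup>2"])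
    show "integrable lborel (\<lambda>x. 2 * (cmod (f x))\<^sup>2 + 2 * (cmod (g x))\<^sup>2)"
      using L2_integrable_square[OF assms(1)] L2_integrable_square[OF assms(2)] by auto
    show "(\<lambda>x. (cmod (f x + g x))\<^sup>2) \<in> borel_measurable lborel" using L2_borel_measurable[OF assms(1)] L2_borel_measurable[OF assms(2)] by simp
    show "AE x in lborel. norm ((cmod (f x + g x))\<^sup>2) \<le> norm (2 * (cmod (f x))\<^sup>2 + 2 * (cmod (g x))\<^sup>2)"
    proof (rule AE_I2)
      fix x
      have "cmod (f x + g x) \<le> cmod (f x) + cmod (g x)" by (rule norm_triangle_ineq)
      hence "(cmod (f x + g x))\<^sup>2 \<le> (cmod (f x) + cmod (g x))\<^sup>2"
        by (simp add: power_mono)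
      also have "\<dots> \<le> 2 * (cmod (f x))\<^sup>2 + 2 * (cmod (g x))\<^sup>2"
        using sum_squares_bound[of "cmod (f x)" "cmod (g x)"] unfolding power2_sum by linarith
      finally show "norm ((cmod (f x + g x))\<^sup>2) \<le> norm (2 * (cmod (f x))\<^sup>2 + 2 * (cmod (g x))\<^sup>2)"
        by simp
    qed
  qed
qed

lemma L2_cmult: assumes "L2 f" shows "L2 (\<lambda>x. c * f x)"
  using assms L2_integrable_square[OF assms] unfolding L2_def by (simp add: norm_mult power_mult_distrib)

lemma L2_uminus: "L2 f \<Longrightarrow> L2 (\<lambda>x. - f x)"
  using L2_cmult[of f "-1"] by simp

lemma L2_diff: "L2 f \<Longrightarrow> L2 g \<Longrightarrow> L2 (\<lambda>x. f x - g x)"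
  using L2_add[of f "\<lambda>x. - g x"] L2_uminus by simp

lemma L2_zero: "L2 (\<lambda>x. 0)"
  by (simp add: L2_def)

lemma L2_bounded_mult:
  assumes "L2 f" "c \<in> borel_measurable lborel" "\<And>x. cmod (c x) \<le> M"
  shows "L2 (\<lambda>x. c x * f x)"
  unfolding L2_def
proof
  show "(\<lambda>x. c x * f x) \<in> borel_measurable lborel" using L2_borel_measurable[OF assms(1)] assms(2) by simp
  show "integrable lborel (\<lambda>x. (cmod (c x * f x))\<^sup>2)"
  proof (rule Bochner_Integration.integrable_bound[where f="\<lambda>x. M\<^sup>2 * (cmod (f x))\<^sup>2"])
    show "integrable lborel (\<lambda>x. M\<^sup>2 * (cmod (f x))\<^sup>2)" using L2_integrable_square[OF assms(1)] by auto
    show "(\<lambda>x. (cmod (c x * f x))\<^sup>2) \<in> borel_measurable lborel" using L2_borel_measurable[OF assms(1)] assms(2) by simp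
    show "AE x in lborel. norm ((cmod (c x * f x))\<^sup>2) \<le> norm (M\<^sup>2 * (cmod (f x))\<^sup>2)"
    proof (rule AE_I2)
      fix x
      have "cmod (c x) * cmod (f x) \<le> M * cmod (f x)" using assms(3)[of x] by (simp add: mult_right_mono)
      hence "(cmod (c x) * cmod (f x))\<^sup>2 \<le> (M * cmod (f x))\<^sup>2"
        by (simp add: power_mono)
      then show "norm ((cmod (c x * f x))\<^sup>2) \<le> norm (M\<^sup>2 * (cmod (f x))\<^sup>2)"
        by (simp add: norm_mult power_mult_distrib)
    qed
  qed
qed

lemma L2_sum: "(\<And>k. k \<in> S \<Longrightarrow> L2 (f k)) \<Longrightarrow> L2 (\<lambda>x. \<Sum>k\<in>S. f k x)"
proof (induction S rule: infinite_finite_induct)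
  case (infinite A) then show ?case by (simp add: L2_zero)
next
  case empty then show ?case by (simp add: L2_zero)
next
  case (insert x F) then show ?case by (simp add: L2_add)
qed

lemma L2_inner_add_left:
  "L2 f \<Longrightarrow> L2 g \<Longrightarrow> L2 h \<Longrightarrow> L2_inner (\<lambda>x. f x + g x) h = L2_inner f h + L2_inner g h"
  unfolding L2_inner_def using L2_integrable_inner[of f h] L2_integrable_inner[of g h]
  by (simp add: distrib_right)

lemma L2_inner_add_right:
  "L2 f \<Longrightarrow> L2 g \<Longrightarrow> L2 h \<Longrightarrow> L2_inner h (\<lambda>x. f x + g x) = L2_inner h f + L2_inner h g"
  unfolding L2_inner_def using L2_integrable_inner[of h f] L2_integrable_inner[of h g]
  by (simp add: distrib_left)

lemma L2_inner_scale_left: "L2_inner (\<lambda>x. c * f x) h = c * L2_inner f h"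
  unfolding L2_inner_def by (simp add: mult.assoc)

lemma L2_inner_scale_right: "L2_inner h (\<lambda>x. c * f x) = cnj c * L2_inner h f"
proof -
  have "(\<lambda>x. h x * cnj (c * f x)) = (\<lambda>x. cnj c * (h x * cnj (f x)))" by (auto simp: fun_eq_iff)
  then show ?thesis unfolding L2_inner_def by simp
qed

lemma L2_inner_cnj: "L2_inner g f = cnj (L2_inner f g)"
  unfolding L2_inner_def by (subst Bochner_Integration.integral_cnj[symmetric]) (simp add: mult.commute)

lemma L2_inner_uminus_left: "L2_inner (\<lambda>x. - f x) h = - L2_inner f h"
  using L2_inner_scale_left[of "-1" f h] by simp

lemma L2_inner_uminus_right: "L2_inner h (\<lambda>x. - f x) = - L2_inner h f"
  using L2_inner_scale_right[of h "-1" f] by simp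

lemma L2_inner_diff_left:
  "L2 f \<Longrightarrow> L2 g \<Longrightarrow> L2 h \<Longrightarrow> L2_inner (\<lambda>x. f x - g x) h = L2_inner f h - L2_inner g h"
  using L2_inner_add_left[of f "\<lambda>x. - g x" h] L2_uminus[of g] L2_inner_uminus_left[of g h] by simp

lemma L2_inner_diff_right:
  "L2 f \<Longrightarrow> L2 g \<Longrightarrow> L2 h \<Longrightarrow> L2_inner h (\<lambda>x. f x - g x) = L2_inner h f - L2_inner h g"
  using L2_inner_add_right[of f "\<lambda>x. - g x" h] L2_uminus[of g] L2_inner_uminus_right[of h g] by simp

lemma L2_norm_square_eq_integral: "L2 f \<Longrightarrow> (L2_norm f)\<^sup>2 = (LINT x|lborel. (cmod (f x))\<^sup>2)"
  unfolding L2_norm_def by (simp add: integral_nonneg_AE)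

lemma L2_norm_nonneg: "0 \<le> L2_norm f"
  unfolding L2_norm_def by simp

lemma L2_inner_self: "L2 f \<Longrightarrow> L2_inner f f = complex_of_real ((L2_norm f)\<^sup>2)"
proof -
  assume f: "L2 f"
  have "L2_inner f f = (LINT x|lborel. complex_of_real ((cmod (f x))\<^sup>2))"
    unfolding L2_inner_def by (simp only: complex_norm_square)
  also have "\<dots> = complex_of_real (LINT x|lborel. (cmod (f x))\<^sup>2)" by (rule integral_complex_of_real)
  finally show ?thesis using L2_norm_square_eq_integral[OF f] by simp
qed

lemma L2_norm_add_scaled_square:
  assumes "L2 f" "L2 g"
  shows "(L2_norm (\<lambda>x. f x + s * g x))\<^sup>2 = (L2_norm f)\<^sup>2 + 2 * Re (cnj s * L2_inner f g) + (cmod s)\<^sup>2 * (L2_norm g)\<^sup>2"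
proof -
  have sg: "L2 (\<lambda>x. s * g x)" using assms(2) by (rule L2_cmult)
  have fs: "L2 (\<lambda>x. f x + s * g x)" using assms(1) sg by (rule L2_add)
  have "complex_of_real ((L2_norm (\<lambda>x. f x + s * g x))\<^sup>2) = L2_inner (\<lambda>x. f x + s * g x) (\<lambda>x. f x + s * g x)"
    using L2_inner_self[OF fs] by simp
  also have "\<dots> = L2_inner f f + L2_inner f (\<lambda>x. s * g x) + (L2_inner (\<lambda>x. s * g x) f + L2_inner (\<lambda>x. s * g x) (\<lambda>x. s * g x))"
    using assms sg fs by (simp add: L2_inner_add_left L2_inner_add_right)
  also have "\<dots> = L2_inner f f + cnj s * L2_inner f g + (s * cnj (L2_inner f g) + s * cnj s * L2_inner g g)"
    by (simp add: L2_inner_scale_left L2_inner_scale_right L2_inner_cnj[of g f] mult.assoc)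
  also have "\<dots> = complex_of_real ((L2_norm f)\<^sup>2 + 2 * Re (cnj s * L2_inner f g) + (cmod s)\<^sup>2 * (L2_norm g)\<^sup>2)"
  proof -
    have "cnj s * L2_inner f g + s * cnj (L2_inner f g) = complex_of_real (2 * Re (cnj s * L2_inner f g))"
      by (simp add: complex_eq_iff)
    moreover have "s * cnj s = complex_of_real ((cmod s)\<^sup>2)" by (rule complex_norm_square[symmetric])
    ultimately show ?thesis using L2_inner_self[OF assms(1)] L2_inner_self[OF assms(2)]
      by (simp add: algebra_simps)
  qed
  finally show ?thesis by (simp only: of_real_eq_iff)
qed

lemma L2_Cauchy_Schwarz:
  assumes "L2 f" "L2 g"
  shows "cmod (L2_inner f g) \<le> L2_norm f * L2_norm g"
proof -
  define w where "w = L2_inner f g"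
  have key0: "0 \<le> (L2_norm f)\<^sup>2 + 2 * (- t * (cmod w)\<^sup>2) + t\<^sup>2 * (cmod w)\<^sup>2 * (L2_norm g)\<^sup>2" for t :: real
  proof -
    have "(L2_norm (\<lambda>x. f x + (- (complex_of_real t * w)) * g x))\<^sup>2 =
        (L2_norm f)\<^sup>2 + 2 * Re (cnj (- (complex_of_real t * w)) * w) + (cmod (- (complex_of_real t * w)))\<^sup>2 * (L2_norm g)\<^sup>2"
      using L2_norm_add_scaled_square[OF assms, of "- (complex_of_real t * w)"] w_def by simp
    also have "Re (cnj (- (complex_of_real t * w)) * w) = - t * (cmod w)\<^sup>2"
    proof -
      have "cnj (- (complex_of_real t * w)) * w = - complex_of_real t * (w * cnj w)" by simp
      also have "\<dots> = complex_of_real (- t * (cmod w)\<^sup>2)" by (simp only: complex_norm_square[symmetric] of_real_mult of_real_minus)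
      finally have e: "cnj (- (complex_of_real t * w)) * w = complex_of_real (- t * (cmod w)\<^sup>2)" .
      show ?thesis unfolding e by (rule Re_complex_of_real)
    qed
    also have "(cmod (- (complex_of_real t * w)))\<^sup>2 = t\<^sup>2 * (cmod w)\<^sup>2"
      by (simp add: norm_mult power_mult_distrib)
    finally have "(L2_norm (\<lambda>x. f x + (- (complex_of_real t * w)) * g x))\<^sup>2 = (L2_norm f)\<^sup>2 + 2 * (- t * (cmod w)\<^sup>2) + t\<^sup>2 * (cmod w)\<^sup>2 * (L2_norm g)\<^sup>2" .
    then show ?thesis by (metis zero_le_power2)
  qed
  have key: "0 \<le> (L2_norm f)\<^sup>2 - 2 * t * (cmod w)\<^sup>2 + t\<^sup>2 * (cmod w)\<^sup>2 * (L2_norm g)\<^sup>2" for t :: real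
    using key0[of t] by (simp add: algebra_simps)
  show ?thesis
  proof (cases "L2_norm g = 0")
    case True
    have "(cmod w)\<^sup>2 = 0"
    proof (rule ccontr)
      assume "(cmod w)\<^sup>2 \<noteq> 0"
      hence pos: "(cmod w)\<^sup>2 > 0" by simp
      have "0 \<le> (L2_norm f)\<^sup>2 - 2 * (((L2_norm f)\<^sup>2 + 1) / (cmod w)\<^sup>2) * (cmod w)\<^sup>2"
        using key[of "((L2_norm f)\<^sup>2 + 1) / (cmod w)\<^sup>2"] True by simp
      also have "\<dots> = - (L2_norm f)\<^sup>2 - 2" using pos by (simp add: field_simps)
      finally show False using zero_le_power2[of "L2_norm f"] by linarith
    qed
    then show ?thesis using True w_def by simp
  next
    case False
    hence pos: "(L2_norm g)\<^sup>2 > 0" using L2_norm_nonneg[of g] by simp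
    have "0 \<le> (L2_norm f)\<^sup>2 - 2 * (1 / (L2_norm g)\<^sup>2) * (cmod w)\<^sup>2 + (1 / (L2_norm g)\<^sup>2)\<^sup>2 * (cmod w)\<^sup>2 * (L2_norm g)\<^sup>2"
      by (rule key)
    also have "\<dots> = (L2_norm f)\<^sup>2 - (cmod w)\<^sup>2 / (L2_norm g)\<^sup>2"
      using pos by (simp add: field_simps power2_eq_square)
    finally have "(cmod w)\<^sup>2 \<le> (L2_norm f)\<^sup>2 * (L2_norm g)\<^sup>2"
      using pos by (simp add: field_simps)
    hence "(cmod w)\<^sup>2 \<le> (L2_norm f * L2_norm g)\<^sup>2" by (simp add: power_mult_distrib)
    then show ?thesis using w_def
      by (meson L2_norm_nonneg mult_nonneg_nonneg power2_le_imp_le)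
  qed
qed

lemma L2_norm_triangle:
  assumes "L2 f" "L2 g"
  shows "L2_norm (\<lambda>x. f x + g x) \<le> L2_norm f + L2_norm g"
proof -
  have "(L2_norm (\<lambda>x. f x + g x))\<^sup>2 = (L2_norm f)\<^sup>2 + 2 * Re (L2_inner f g) + (L2_norm g)\<^sup>2"
    using L2_norm_add_scaled_square[OF assms, of 1] by simp
  also have "Re (L2_inner f g) \<le> L2_norm f * L2_norm g"
    using L2_Cauchy_Schwarz[OF assms] complex_Re_le_cmod order_trans by blast
  hence "(L2_norm f)\<^sup>2 + 2 * Re (L2_inner f g) + (L2_norm g)\<^sup>2 \<le> (L2_norm f + L2_norm g)\<^sup>2"
    by (simp add: power2_sum)
  finally show ?thesis
    using L2_norm_nonneg by (meson add_nonneg_nonneg power2_le_imp_le)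
qed

lemma L2_norm_scale: "L2_norm (\<lambda>x. c * f x) = cmod c * L2_norm f"
  unfolding L2_norm_def by (simp add: norm_mult power_mult_distrib real_sqrt_mult)

lemma L2_norm_commute: "L2_norm (\<lambda>x. f x - g x) = L2_norm (\<lambda>x. g x - f x)"
  unfolding L2_norm_def by (simp add: norm_minus_commute)

lemma L2_norm_zero_iff: "L2 f \<Longrightarrow> L2_norm f = 0 \<longleftrightarrow> (AE x in lborel. f x = 0)"
proof -
  assume f: "L2 f"
  have "L2_norm f = 0 \<longleftrightarrow> (LINT x|lborel. (cmod (f x))\<^sup>2) = 0"
    using L2_norm_square_eq_integral[OF f] L2_norm_nonneg[of f] by (metis power_zero_numeral zero_eq_power2)
  also have "\<dots> \<longleftrightarrow> (AE x in lborel. (cmod (f x))\<^sup>2 = 0)"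
    by (rule integral_nonneg_eq_0_iff_AE) (use L2_integrable_square[OF f] in auto)
  finally show ?thesis by simp
qed

lemma L2_norm_cong_AE:
  assumes "L2 f" "L2 g" "AE x in lborel. f x = g x"
  shows "L2_norm f = L2_norm g"
proof -
  have "(LINT x|lborel. (cmod (f x))\<^sup>2) = (LINT x|lborel. (cmod (g x))\<^sup>2)"
    by (rule integral_cong_AE) (use assms L2_borel_measurable in auto)
  then show ?thesis unfolding L2_norm_def by simp
qed

lemma L2_inner_cong_AE_left:
  assumes "L2 f" "L2 g" "L2 h" "AE x in lborel. f x = g x"
  shows "L2_inner f h = L2_inner g h"
  unfolding L2_inner_def
  by (rule integral_cong_AE) (use assms L2_borel_measurable L2_cnj in auto)

lemma L2_inner_cong_AE_right:
  assumes "L2 f" "L2 g" "L2 h" "AE x in lborel. f x = g x"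
  shows "L2_inner h f = L2_inner h g"
  using L2_inner_cong_AE_left[OF assms] L2_inner_cnj by metis

lemma tendsto_L2_inner_left:
  assumes L: "\<And>k. L2 (f k)" "L2 F" "L2 g" and c: "(\<lambda>k. L2_norm (\<lambda>x. f k x - F x)) \<longlonglongrightarrow> 0"
  shows "(\<lambda>k. L2_inner (f k) g) \<longlonglongrightarrow> L2_inner F g"
proof -
  have "(\<lambda>k. L2_inner (f k) g - L2_inner F g) \<longlonglongrightarrow> 0"
  proof (rule Lim_null_comparison)
    show "\<forall>\<^sub>F k in sequentially. norm (L2_inner (f k) g - L2_inner F g) \<le> L2_norm (\<lambda>x. f k x - F x) * L2_norm g"
    proof (rule always_eventually, rule allI)
      fix k
      have "L2_inner (f k) g - L2_inner F g = L2_inner (\<lambda>x. f k x - F x) g"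
        using L by (simp add: L2_inner_diff_left)
      then show "norm (L2_inner (f k) g - L2_inner F g) \<le> L2_norm (\<lambda>x. f k x - F x) * L2_norm g"
        using L2_Cauchy_Schwarz[OF L2_diff[OF L(1) L(2)] L(3)] by simp
    qed
    show "(\<lambda>k. L2_norm (\<lambda>x. f k x - F x) * L2_norm g) \<longlonglongrightarrow> 0"
      using tendsto_mult_left_zero[OF c] by simp
  qed
  then show ?thesis by (simp add: LIM_zero_iff)
qed

lemma tendsto_L2_inner_right:
  assumes L: "\<And>k. L2 (f k)" "L2 F" "L2 g" and c: "(\<lambda>k. L2_norm (\<lambda>x. f k x - F x)) \<longlonglongrightarrow> 0"
  shows "(\<lambda>k. L2_inner g (f k)) \<longlonglongrightarrow> L2_inner g F"
proof -
  have "(\<lambda>k. cnj (L2_inner (f k) g)) \<longlonglongrightarrow> cnj (L2_inner F g)"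
    by (rule tendsto_cnj[OF tendsto_L2_inner_left[OF assms]])
  then show ?thesis by (simp add: L2_inner_cnj[of g])
qed

lemma tendsto_L2_norm:
  assumes L: "\<And>k. L2 (f k)" "L2 F" and c: "(\<lambda>k. L2_norm (\<lambda>x. f k x - F x)) \<longlonglongrightarrow> 0"
  shows "(\<lambda>k. L2_norm (f k)) \<longlonglongrightarrow> L2_norm F"
proof -
  have "(\<lambda>k. L2_norm (f k) - L2_norm F) \<longlonglongrightarrow> 0"
  proof (rule Lim_null_comparison)
    show "\<forall>\<^sub>F k in sequentially. norm (L2_norm (f k) - L2_norm F) \<le> L2_norm (\<lambda>x. f k x - F x)"
    proof (rule always_eventually, rule allI)
      fix k
      have a: "L2_norm (f k) \<le> L2_norm (\<lambda>x. f k x - F x) + L2_norm F"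
        using L2_norm_triangle[OF L2_diff[OF L(1)[of k] L(2)] L(2)] by simp
      have b: "L2_norm F \<le> L2_norm (\<lambda>x. F x - f k x) + L2_norm (f k)"
        using L2_norm_triangle[OF L2_diff[OF L(2) L(1)[of k]] L(1)[of k]] by simp
      show "norm (L2_norm (f k) - L2_norm F) \<le> L2_norm (\<lambda>x. f k x - F x)"
        using a b L2_norm_commute[of F "f k"] by simp
    qed
  qed (rule c)
  then show ?thesis by (simp add: LIM_zero_iff)
qed

lemma L2_parallelogram:
  assumes "L2 p" "L2 q"
  shows "(L2_norm (\<lambda>x. p x - q x))\<^sup>2 + (L2_norm (\<lambda>x. p x + q x))\<^sup>2 = 2 * (L2_norm p)\<^sup>2 + 2 * (L2_norm q)\<^sup>2"
  using L2_norm_add_scaled_square[OF assms, of 1] L2_norm_add_scaled_square[OF assms, of "-1"] by simp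

lemma obtain_minimizing_sequence:
  fixes r :: "'a \<Rightarrow> real"
  assumes x0: "P x0" and nonneg: "\<And>x. P x \<Longrightarrow> 0 \<le> r x"
  obtains d xs where "0 \<le> d" "\<And>x. P x \<Longrightarrow> d \<le> r x" "\<And>n. P (xs n)"
    "\<And>n. (r (xs n))\<^sup>2 \<le> d\<^sup>2 + 1 / real (Suc n)" "(\<lambda>n. r (xs n)) \<longlonglongrightarrow> d"
proof -
  define d where "d = Inf (r ` Collect P)"
  have ne: "r ` Collect P \<noteq> {}" using x0 by blast
  have d_le: "d \<le> r x" if "P x" for x
    unfolding d_def by (rule cInf_lower) (use that nonneg in \<open>auto simp: bdd_below_def\<close>)
  have d0: "0 \<le> d" unfolding d_def by (rule cInf_greatest[OF ne]) (auto simp: nonneg)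
  have "\<exists>x. P x \<and> r x < sqrt (d\<^sup>2 + 1 / real (Suc n))" for n
  proof -
    have "d < sqrt (d\<^sup>2 + 1 / real (Suc n))"
      using d0 by (simp add: real_less_rsqrt)
    then show ?thesis using cInf_lessD[OF ne] unfolding d_def by auto
  qed
  then obtain xs where P: "\<And>n. P (xs n)" and small: "\<And>n. r (xs n) < sqrt (d\<^sup>2 + 1 / real (Suc n))"
    by metis
  have small2: "(r (xs n))\<^sup>2 \<le> d\<^sup>2 + 1 / real (Suc n)" for n
    using small[of n] nonneg[OF P] by (simp add: real_less_rsqrt less_imp_le real_sqrt_le_iff
        flip: real_sqrt_le_iff[of "(r (xs n))\<^sup>2"])
  have "(\<lambda>n. r (xs n)) \<longlonglongrightarrow> d"
  proof (rule real_tendsto_sandwich[OF _ _ tendsto_const])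
    show "\<forall>\<^sub>F n in sequentially. d \<le> r (xs n)" using d_le[OF P] by simp
    show "\<forall>\<^sub>F n in sequentially. r (xs n) \<le> sqrt (d\<^sup>2 + 1 / real (Suc n))"
      using small by (simp add: less_imp_le)
    have "(\<lambda>n. sqrt (d\<^sup>2 + 1 / real (Suc n))) \<longlonglongrightarrow> sqrt (d\<^sup>2 + 0)"
      by (intro tendsto_intros LIMSEQ_inverse_real_of_nat[unfolded inverse_eq_divide])
    then show "(\<lambda>n. sqrt (d\<^sup>2 + 1 / real (Suc n))) \<longlonglongrightarrow> d" using d0 by simp
  qed
  with that d0 d_le P small2 show ?thesis by blast
qed

text \<open>The parallelogram law makes every minimising sequence for the distance from \<open>y\<close> to a
  set closed under midpoints a Cauchy sequence.\<close>

lemma L2_minimizing_sequence_Cauchy: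
  assumes L: "\<And>n. L2 (b n)" "L2 y" and d: "0 \<le> d"
    and mid: "\<And>j k. d \<le> L2_norm (\<lambda>x. y x - (b j x + b k x) / 2)"
    and min: "\<And>n. (L2_norm (\<lambda>x. y x - b n x))\<^sup>2 \<le> d\<^sup>2 + 1 / real (Suc n)"
    and e: "e > 0"
  shows "\<exists>N. \<forall>j\<ge>N. \<forall>k\<ge>N. L2_norm (\<lambda>x. b j x - b k x) < e"
proof -
  have sq: "(L2_norm (\<lambda>x. b j x - b k x))\<^sup>2 \<le> 2 / real (Suc j) + 2 / real (Suc k)" for j k
  proof -
    have Lj: "L2 (\<lambda>x. y x - b j x)" and Lk: "L2 (\<lambda>x. y x - b k x)" using L by (simp_all add: L2_diff)
    have n1: "L2_norm (\<lambda>x. (y x - b j x) - (y x - b k x)) = L2_norm (\<lambda>x. b j x - b k x)"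
      using L2_norm_commute[of "b k" "b j"] by simp
    have "(\<lambda>x. (y x - b j x) + (y x - b k x)) = (\<lambda>x. 2 * (y x - (b j x + b k x) / 2))"
      by (auto simp: algebra_simps)
    then have n2: "L2_norm (\<lambda>x. (y x - b j x) + (y x - b k x)) = 2 * L2_norm (\<lambda>x. y x - (b j x + b k x) / 2)"
      by (simp only: L2_norm_scale) simp
    have "(2 * d)\<^sup>2 \<le> (L2_norm (\<lambda>x. (y x - b j x) + (y x - b k x)))\<^sup>2"
      unfolding n2 using d mid[of j k] by (intro power_mono) auto
    then show ?thesis
      using L2_parallelogram[OF Lj Lk] min[of j] min[of k] unfolding n1 by (simp add: power_mult_distrib)
  qed
  obtain N :: nat where N: "real N > 4 / e\<^sup>2" using reals_Archimedean2 by blast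
  have "L2_norm (\<lambda>x. b j x - b k x) < e" if "j \<ge> N" "k \<ge> N" for j k
  proof -
    have "real (Suc j) > 4 / e\<^sup>2" "real (Suc k) > 4 / e\<^sup>2" using N that by linarith+
    then have "2 / real (Suc j) < e\<^sup>2 / 2" "2 / real (Suc k) < e\<^sup>2 / 2"
      using e by (simp_all add: field_simps)
    then have "(L2_norm (\<lambda>x. b j x - b k x))\<^sup>2 < e\<^sup>2" using sq[of j k] by linarith
    then show ?thesis using e L2_norm_nonneg by (meson less_le power_less_imp_less_base)
  qed
  then show ?thesis by blast
qed

section \<open>Completeness of \<open>L\<^sup>2(\<real>)\<close>\<close>

lemma L2_indicator_Icc: "L2 (\<lambda>x. complex_of_real (indicator {a..b} x))"
proof -
  have "integrable lborel (\<lambda>x. indicator {a..b} x :: real)"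
    by (simp add: integrable_indicator_iff emeasure_lborel_Icc_eq)
  moreover have "(\<lambda>x. (cmod (complex_of_real (indicator {a..b} x)))\<^sup>2) = (\<lambda>x. indicator {a..b} x :: real)"
    by (auto simp: fun_eq_iff indicator_def)
  ultimately show ?thesis unfolding L2_def by simp
qed

lemma L2_of_real_cmod: "L2 f \<Longrightarrow> L2 (\<lambda>x. complex_of_real (cmod (f x)))"
proof -
  assume f: "L2 f"
  have [measurable]: "f \<in> borel_measurable borel" by (rule L2_borel_measurable[OF f])
  have "(\<lambda>x. complex_of_real (cmod (f x))) \<in> borel_measurable borel" by measurable
  then show ?thesis using f unfolding L2_def by simp
qed

lemma L2_norm_of_real_cmod: "L2_norm (\<lambda>x. complex_of_real (cmod (f x))) = L2_norm f"
  unfolding L2_norm_def by simp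

lemma L2_local_L1_bound:
  assumes "L2 f"
  shows "(\<integral>\<^sup>+x. ennreal (cmod (f x) * indicator {a..b} x) \<partial>lborel)
          \<le> ennreal (L2_norm f * L2_norm (\<lambda>x. complex_of_real (indicator {a..b} x)))"
proof -
  let ?u = "\<lambda>x. complex_of_real (cmod (f x))"
  let ?v = "\<lambda>x. complex_of_real (indicator {a..b} x)"
  have Lu: "L2 ?u" by (rule L2_of_real_cmod[OF assms])
  have Lv: "L2 ?v" by (rule L2_indicator_Icc)
  have int: "integrable lborel (\<lambda>x. cmod (f x) * indicator {a..b} x)"
  proof -
    have "integrable lborel (\<lambda>x. ?u x * cnj (?v x))" by (rule L2_integrable_inner[OF Lu Lv])
    then have "integrable lborel (\<lambda>x. Re (?u x * cnj (?v x)))" by (rule integrable_Re)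
    then show ?thesis by simp
  qed
  have "(\<integral>\<^sup>+x. ennreal (cmod (f x) * indicator {a..b} x) \<partial>lborel) = ennreal (LINT x|lborel. cmod (f x) * indicator {a..b} x)"
    by (rule nn_integral_eq_integral[OF int]) simp
  also have "(LINT x|lborel. cmod (f x) * indicator {a..b} x) \<le> L2_norm f * L2_norm ?v"
  proof -
  have "(LINT x|lborel. cmod (f x) * indicator {a..b} x) = Re (L2_inner ?u ?v)"
  proof -
    have "Re (L2_inner ?u ?v) = (LINT x|lborel. Re (?u x * cnj (?v x)))"
      unfolding L2_inner_def by (rule integral_Re[symmetric, OF L2_integrable_inner[OF Lu Lv]])
    then show ?thesis by simp
  qed
  also have "Re (L2_inner ?u ?v) \<le> L2_norm ?u * L2_norm ?v"
    using L2_Cauchy_Schwarz[OF Lu Lv] complex_Re_le_cmod order_trans by blast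
  finally show ?thesis by (simp add: L2_norm_of_real_cmod)
  qed
  finally show ?thesis by (simp add: ennreal_leI)
qed

lemma AE_summable_of_L2_norm_geometric:
  assumes L: "\<And>i. L2 (g i)" and step: "\<And>i. L2_norm (\<lambda>x. g (Suc i) x - g i x) \<le> (1/2)^i"
  shows "AE x in lborel. summable (\<lambda>i. cmod (g (Suc i) x - g i x))"
proof -
  define d where "d i x = cmod (g (Suc i) x - g i x)" for i x
  have dmeas: "d i \<in> borel_measurable lborel" for i
    unfolding d_def using L2_borel_measurable[OF L[of i]] L2_borel_measurable[OF L[of "Suc i"]] by simp
  have R: "AE x in lborel. x \<in> {- real R..real R} \<longrightarrow> summable (\<lambda>i. d i x)" for R :: nat
  proof -
    define I where "I = {- real R..real R}"
    define c where "c = L2_norm (\<lambda>x. complex_of_real (indicator I x))"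
    have c0: "0 \<le> c" unfolding c_def by (rule L2_norm_nonneg)
    have b: "(\<integral>\<^sup>+x. ennreal (d i x * indicator I x) \<partial>lborel) \<le> ennreal ((1/2)^i * c)" for i
    proof -
      have "(\<integral>\<^sup>+x. ennreal (d i x * indicator I x) \<partial>lborel)
          \<le> ennreal (L2_norm (\<lambda>x. g (Suc i) x - g i x) * c)"
        unfolding d_def c_def I_def by (rule L2_local_L1_bound[OF L2_diff[OF L L]])
      also have "\<dots> \<le> ennreal ((1/2)^i * c)"
        using step[of i] c0 by (simp add: mult_right_mono)
      finally show ?thesis .
    qed
    have "(\<integral>\<^sup>+x. (\<Sum>i. ennreal (d i x * indicator I x)) \<partial>lborel)
         = (\<Sum>i. (\<integral>\<^sup>+x. ennreal (d i x * indicator I x) \<partial>lborel))"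
      by (rule nn_integral_suminf) (use dmeas in \<open>simp add: I_def\<close>)
    also have "\<dots> \<le> (\<Sum>i. ennreal ((1/2)^i * c))"
      by (intro suminf_le b) auto
    also have "\<dots> = ennreal (\<Sum>i. (1/2)^i * c)"
      by (rule suminf_ennreal2) (use c0 summable_geometric[of "1/2"] in \<open>auto intro: summable_mult2\<close>)
    finally have fin: "(\<integral>\<^sup>+x. (\<Sum>i. ennreal (d i x * indicator I x)) \<partial>lborel) \<noteq> \<infinity>"
      using neq_top_trans[OF ennreal_neq_top] unfolding infinity_ennreal_def by blast
    have "AE x in lborel. (\<Sum>i. ennreal (d i x * indicator I x)) \<noteq> \<infinity>"
      by (rule nn_integral_PInf_AE[OF _ fin]) (use dmeas in \<open>simp add: I_def\<close>)
    then show ?thesis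
    proof (rule AE_mp, intro AE_I2 impI)
      fix x assume fx: "(\<Sum>i. ennreal (d i x * indicator I x)) \<noteq> \<infinity>" and xR: "x \<in> {- real R..real R}"
      then have "(\<Sum>i. ennreal (d i x)) \<noteq> top" by (simp add: I_def)
      then show "summable (\<lambda>i. d i x)"
        by (rule summable_suminf_not_top[rotated]) (simp add: d_def)
    qed
  qed
  have "AE x in lborel. \<forall>R::nat. x \<in> {- real R..real R} \<longrightarrow> summable (\<lambda>i. d i x)"
    unfolding AE_all_countable using R by blast
  then show ?thesis
  proof (rule AE_mp, intro AE_I2 impI)
    fix x assume "\<forall>R::nat. x \<in> {- real R..real R} \<longrightarrow> summable (\<lambda>i. d i x)"
    moreover have "x \<in> {- real (nat \<lceil>\<bar>x\<bar>\<rceil>)..real (nat \<lceil>\<bar>x\<bar>\<rceil>)}"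
      by simp linarith
    ultimately show "summable (\<lambda>i. cmod (g (Suc i) x - g i x))" unfolding d_def by blast
  qed
qed

lemma convergent_of_summable_norm_diff:
  fixes g :: "nat \<Rightarrow> 'a::banach"
  assumes "summable (\<lambda>i. norm (g (Suc i) - g i))"
  shows "convergent g"
proof -
  have "summable (\<lambda>i. g (Suc i) - g i)"
    by (rule summable_norm_cancel[OF assms])
  then have "(\<lambda>n. \<Sum>i<n. g (Suc i) - g i) \<longlonglongrightarrow> (\<Sum>i. g (Suc i) - g i)"
    by (rule summable_LIMSEQ)
  then have "(\<lambda>n. g n - g 0) \<longlonglongrightarrow> (\<Sum>i. g (Suc i) - g i)"
    by (subst (asm) sum_lessThan_telescope)
  then have "(\<lambda>n. g n - g 0 + g 0) \<longlonglongrightarrow> (\<Sum>i. g (Suc i) - g i) + g 0"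
    by (intro tendsto_add tendsto_const)
  then show ?thesis unfolding convergent_def by auto
qed

lemma L2_norm_diff_le_of_AE_tendsto:
  assumes L: "\<And>n. L2 (g n)" "L2 h" and F: "F \<in> borel_measurable lborel"
    and lim: "AE x in lborel. (\<lambda>n. g n x) \<longlonglongrightarrow> F x"
    and bound: "eventually (\<lambda>n. L2_norm (\<lambda>x. g n x - h x) \<le> e) sequentially" and e: "0 \<le> e"
  shows "L2 (\<lambda>x. F x - h x)" "L2_norm (\<lambda>x. F x - h x) \<le> e"
proof -
  let ?h = "\<lambda>n x. ennreal ((cmod (g n x - h x))\<^sup>2)"
  have hmeas: "?h n \<in> borel_measurable lborel" for n
    using L2_borel_measurable[OF L(1)[of n]] L2_borel_measurable[OF L(2)] by simp
  have "(\<integral>\<^sup>+x. ennreal ((cmod (F x - h x))\<^sup>2) \<partial>lborel) = (\<integral>\<^sup>+x. liminf (\<lambda>n. ?h n x) \<partial>lborel)"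
  proof (rule nn_integral_cong_AE, rule AE_mp[OF lim], intro AE_I2 impI)
    fix x assume "(\<lambda>n. g n x) \<longlonglongrightarrow> F x"
    then have "(\<lambda>n. (cmod (g n x - h x))\<^sup>2) \<longlonglongrightarrow> (cmod (F x - h x))\<^sup>2"
      by (intro tendsto_intros)
    then have "(\<lambda>n. ?h n x) \<longlonglongrightarrow> ennreal ((cmod (F x - h x))\<^sup>2)"
      by (rule tendsto_ennrealI)
    then show "ennreal ((cmod (F x - h x))\<^sup>2) = liminf (\<lambda>n. ?h n x)"
      by (rule lim_imp_Liminf[symmetric, rotated]) simp
  qed
  also have "\<dots> \<le> liminf (\<lambda>n. (\<integral>\<^sup>+x. ?h n x \<partial>lborel))"
    by (rule nn_integral_liminf) (rule hmeas)
  also have "\<dots> \<le> limsup (\<lambda>n. (\<integral>\<^sup>+x. ?h n x \<partial>lborel))"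
    by (rule Liminf_le_Limsup) simp
  also have "\<dots> \<le> ennreal (e\<^sup>2)"
  proof (rule Limsup_bounded, rule eventually_mono[OF bound])
    fix n assume n: "L2_norm (\<lambda>x. g n x - h x) \<le> e"
    have Ln: "L2 (\<lambda>x. g n x - h x)" by (rule L2_diff[OF L])
    have "(\<integral>\<^sup>+x. ?h n x \<partial>lborel) = ennreal ((L2_norm (\<lambda>x. g n x - h x))\<^sup>2)"
      using L2_norm_square_eq_integral[OF Ln] L2_integrable_square[OF Ln] by (simp add: nn_integral_eq_integral)
    also have "\<dots> \<le> ennreal (e\<^sup>2)"
      using n by (intro ennreal_leI power_mono L2_norm_nonneg)
    finally show "(\<integral>\<^sup>+x. ?h n x \<partial>lborel) \<le> ennreal (e\<^sup>2)" .
  qed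
  finally have bnd: "(\<integral>\<^sup>+x. ennreal ((cmod (F x - h x))\<^sup>2) \<partial>lborel) \<le> ennreal (e\<^sup>2)" .
  have meas: "(\<lambda>x. F x - h x) \<in> borel_measurable lborel" using F L2_borel_measurable[OF L(2)] by simp
  have int: "integrable lborel (\<lambda>x. (cmod (F x - h x))\<^sup>2)"
    by (rule integrableI_bounded) (use meas bnd in \<open>auto simp: le_less_trans[OF bnd]\<close>)
  show LF: "L2 (\<lambda>x. F x - h x)" unfolding L2_def using int meas by simp
  have "ennreal ((L2_norm (\<lambda>x. F x - h x))\<^sup>2) \<le> ennreal (e\<^sup>2)"
    using L2_norm_square_eq_integral[OF LF] int bnd by (simp add: nn_integral_eq_integral)
  then have "(L2_norm (\<lambda>x. F x - h x))\<^sup>2 \<le> e\<^sup>2"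
    using ennreal_le_iff[OF zero_le_power2[of e]] by blast
  then show "L2_norm (\<lambda>x. F x - h x) \<le> e"
    using e by (meson power2_le_imp_le)
qed

text \<open>Riesz--Fischer: a Cauchy sequence has a subsequence with summable increments, which
  converges pointwise almost everywhere; by Fatou its limit is also the L2 limit.\<close>
lemma L2_Cauchy_convergent:
  assumes L: "\<And>k. L2 (f k)"
    and C: "\<And>e. e > 0 \<Longrightarrow> \<exists>N. \<forall>j\<ge>N. \<forall>k\<ge>N. L2_norm (\<lambda>x. f j x - f k x) < e"
  shows "\<exists>F. L2 F \<and> (\<lambda>k. L2_norm (\<lambda>x. f k x - F x)) \<longlonglongrightarrow> 0"
proof -
  from C obtain N where N: "\<And>e j k. e > 0 \<Longrightarrow> j \<ge> N e \<Longrightarrow> k \<ge> N e \<Longrightarrow> L2_norm (\<lambda>x. f j x - f k x) < e"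
    by metis
  define r where "r = rec_nat (N 1) (\<lambda>i ri. max (N ((1/2)^(Suc i))) (Suc ri))"
  have r0: "r 0 = N 1" and rS: "\<And>i. r (Suc i) = max (N ((1/2)^(Suc i))) (Suc (r i))"
    by (simp_all add: r_def)
  have rN: "N ((1/2)^i) \<le> r i" for i by (cases i) (simp_all add: r0 rS)
  have "strict_mono r" unfolding strict_mono_Suc_iff using rS by (auto simp: less_max_iff_disj)
  then have rge: "i \<le> r i" for i by (rule seq_suble)
  define g where "g i = f (r i)" for i
  have Lg: "L2 (g i)" for i unfolding g_def by (rule L)
  have step: "L2_norm (\<lambda>x. g (Suc i) x - g i x) \<le> (1/2)^i" for i
    unfolding g_def by (rule less_imp_le, rule N) (use rN[of i] rS[of i] in auto)
  define F where "F x = lim (\<lambda>n. g n x)" for x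
  have gF: "AE x in lborel. (\<lambda>n. g n x) \<longlonglongrightarrow> F x"
    using AE_summable_of_L2_norm_geometric[OF Lg step]
    by eventually_elim (use convergent_of_summable_norm_diff[of "\<lambda>n. g n _"] in
        \<open>simp add: F_def convergent_LIMSEQ_iff\<close>)
  have Fmeas: "F \<in> borel_measurable lborel"
    unfolding F_def using L2_borel_measurable[OF Lg] by measurable
  have close: "L2 (\<lambda>x. F x - f j x) \<and> L2_norm (\<lambda>x. F x - f j x) \<le> e" if e: "e > 0" "j \<ge> N e" for e j
  proof -
    have "L2_norm (\<lambda>x. g n x - f j x) < e" if "n \<ge> N e" for n
      unfolding g_def using e that rge[of n] by (intro N) auto
    then have "eventually (\<lambda>n. L2_norm (\<lambda>x. g n x - f j x) \<le> e) sequentially"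
      by (intro eventually_sequentiallyI[of "N e"]) (simp add: less_imp_le)
    then show ?thesis
      using L2_norm_diff_le_of_AE_tendsto[OF Lg L Fmeas gF] e by auto
  qed
  have LF: "L2 F"
    using L2_add[OF conjunct1[OF close[of 1 "N 1"]] L[of "N 1"]] by simp
  have "(\<lambda>k. L2_norm (\<lambda>x. f k x - F x)) \<longlonglongrightarrow> 0"
  proof (rule LIMSEQ_I)
    fix e :: real assume e: "e > 0"
    have "norm (L2_norm (\<lambda>x. f k x - F x)) < e" if k: "k \<ge> N (e/2)" for k
      using close[of "e/2" k] e k L2_norm_commute[of "f k" F] L2_norm_nonneg[of "\<lambda>x. f k x - F x"] by simp
    then show "\<exists>no. \<forall>k\<ge>no. norm (L2_norm (\<lambda>x. f k x - F x) - 0) < e" by auto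
  qed
  with LF show ?thesis by blast
qed

section \<open>Test functions and the Sobolev space \<open>H\<^sup>m\<close>\<close>

lemma L2_of_real_compact_support:
  assumes c: "continuous_on UNIV g" and R: "\<And>x. \<bar>x\<bar> > L \<Longrightarrow> g x = 0"
  shows "L2 (\<lambda>x. complex_of_real (g x))"
proof -
  have meas: "(\<lambda>x. complex_of_real (g x)) \<in> borel_measurable borel"
    by (intro borel_measurable_continuous_onI continuous_intros c[THEN continuous_on_subset]) auto
  have "integrable lborel (\<lambda>x. indicator {-L..L} x *\<^sub>R (g x)\<^sup>2)"
    by (rule borel_integrable_compact) (auto intro!: continuous_intros c[THEN continuous_on_subset])
  moreover have "(\<lambda>x. indicator {-L..L} x *\<^sub>R (g x)\<^sup>2) = (\<lambda>x. (cmod (complex_of_real (g x)))\<^sup>2)"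
  proof
    fix x
    show "indicator {-L..L} x *\<^sub>R (g x)\<^sup>2 = (cmod (complex_of_real (g x)))\<^sup>2"
    proof (cases "\<bar>x\<bar> > L")
      case True then show ?thesis using R[of x] by simp
    next
      case False then show ?thesis by (auto simp: indicator_def abs_le_iff)
    qed
  qed
  ultimately show ?thesis using meas unfolding L2_def by simp
qed

lemma test_function_support:
  assumes "test_function Phi"
  obtains R where "\<And>k x. \<bar>x\<bar> > R \<Longrightarrow> Phi k x = 0"
proof -
  from assms obtain R where R: "\<And>x. \<bar>x\<bar> > R \<Longrightarrow> Phi 0 x = 0"
    and D: "\<And>k x. (Phi k has_real_derivative Phi (Suc k) x) (at x)"
    unfolding test_function_def by blast
  have "\<bar>x\<bar> > R \<Longrightarrow> Phi k x = 0" for k x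
  proof (induction k arbitrary: x)
    case 0 then show ?case by (rule R)
  next
    case (Suc k)
    have "((\<lambda>_. 0) has_real_derivative Phi (Suc k) x) (at x)"
    proof (rule has_field_derivative_transform_within_open[OF D[of k x]])
      show "open {y. \<bar>y\<bar> > R}" by (intro open_Collect_less continuous_intros)
      show "x \<in> {y. \<bar>y\<bar> > R}" using Suc.prems by simp
      show "\<And>y. y \<in> {y. \<bar>y\<bar> > R} \<Longrightarrow> Phi k y = 0" using Suc.IH by simp
    qed
    then show ?case using DERIV_unique DERIV_const by metis
  qed
  then show ?thesis using that by blast
qed

lemma continuous_on_test_function:
  assumes "test_function Phi"
  shows "continuous_on UNIV (Phi k)"
proof -
  have "\<And>x. isCont (Phi k) x"
    using assms unfolding test_function_def by (meson DERIV_isCont)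
  then show ?thesis by (simp add: continuous_at_imp_continuous_on)
qed

lemma L2_test_function:
  assumes "test_function Phi"
  shows "L2 (\<lambda>x. complex_of_real (Phi k x))"
proof -
  obtain R where "\<And>k x. \<bar>x\<bar> > R \<Longrightarrow> Phi k x = 0" using test_function_support[OF assms] by blast
  then show ?thesis by (intro L2_of_real_compact_support[OF continuous_on_test_function[OF assms]])
qed

lemma integrable_mult_test_function:
  "L2 f \<Longrightarrow> test_function Phi \<Longrightarrow> integrable lborel (\<lambda>x. f x * complex_of_real (Phi k x))"
  using L2_integrable_mult L2_test_function by blast

lemma sobolev_L2: "sobolev m f Df \<Longrightarrow> L2 f"
  unfolding sobolev_def by auto

lemma sobolev_L2_deriv: "sobolev m f Df \<Longrightarrow> k \<le> m \<Longrightarrow> L2 (Df k)"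
  unfolding sobolev_def by auto

lemma sobolev_deriv_0: "sobolev m f Df \<Longrightarrow> Df 0 = f"
  unfolding sobolev_def by auto

lemma sobolev_lincomb:
  assumes f: "sobolev m f Df" and g: "sobolev m g Dg"
  shows "sobolev m (\<lambda>x. f x + c * g x) (\<lambda>k x. Df k x + c * Dg k x)"
  unfolding sobolev_def
proof (intro conjI allI impI)
  show "(\<lambda>x. Df 0 x + c * Dg 0 x) = (\<lambda>x. f x + c * g x)"
    using sobolev_deriv_0[OF f] sobolev_deriv_0[OF g] by simp
  show "L2 (\<lambda>x. Df k x + c * Dg k x)" if "k \<le> m" for k
    using sobolev_L2_deriv[OF f that] sobolev_L2_deriv[OF g that] by (intro L2_add L2_cmult)
  fix Phi k assume Phi: "test_function Phi" and k: "k \<le> m"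
  have Lf: "L2 f" and Lg: "L2 g" using f g by (simp_all add: sobolev_L2)
  have LDf: "L2 (Df k)" and LDg: "L2 (Dg k)" using f g k by (simp_all add: sobolev_L2_deriv)
  have wf: "(LINT x|lborel. f x * complex_of_real (Phi k x)) = (-1) ^ k * (LINT x|lborel. Df k x * complex_of_real (Phi 0 x))"
    using f Phi k unfolding sobolev_def by blast
  have wg: "(LINT x|lborel. g x * complex_of_real (Phi k x)) = (-1) ^ k * (LINT x|lborel. Dg k x * complex_of_real (Phi 0 x))"
    using g Phi k unfolding sobolev_def by blast
  have "(LINT x|lborel. (f x + c * g x) * complex_of_real (Phi k x))
      = (LINT x|lborel. f x * complex_of_real (Phi k x) + c * (g x * complex_of_real (Phi k x)))"
    by (simp add: algebra_simps)
  also have "\<dots> = (LINT x|lborel. f x * complex_of_real (Phi k x)) + c * (LINT x|lborel. g x * complex_of_real (Phi k x))"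
    using integrable_mult_test_function[OF Lf Phi] integrable_mult_test_function[OF Lg Phi] by simp
  also have "\<dots> = (-1) ^ k * ((LINT x|lborel. Df k x * complex_of_real (Phi 0 x)) + c * (LINT x|lborel. Dg k x * complex_of_real (Phi 0 x)))"
    using wf wg by (simp add: algebra_simps)
  also have "(LINT x|lborel. Df k x * complex_of_real (Phi 0 x)) + c * (LINT x|lborel. Dg k x * complex_of_real (Phi 0 x))
      = (LINT x|lborel. Df k x * complex_of_real (Phi 0 x) + c * (Dg k x * complex_of_real (Phi 0 x)))"
    using integrable_mult_test_function[OF LDf Phi] integrable_mult_test_function[OF LDg Phi] by simp
  also have "\<dots> = (LINT x|lborel. (Df k x + c * Dg k x) * complex_of_real (Phi 0 x))"
    by (simp add: algebra_simps)
  finally show "(LINT x|lborel. (f x + c * g x) * complex_of_real (Phi k x)) =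
       (- 1) ^ k * (LINT x|lborel. (Df k x + c * Dg k x) * complex_of_real (Phi 0 x))" .
qed

lemma sobolev_zero: "sobolev m (\<lambda>x. 0) (\<lambda>k x. 0)"
  unfolding sobolev_def by (simp add: L2_zero)

lemma sobolev_scale:
  assumes f: "sobolev m f Df"
  shows "sobolev m (\<lambda>x. c * f x) (\<lambda>k x. c * Df k x)"
  using sobolev_lincomb[OF sobolev_zero f, of c] by simp

lemma integral_by_parts_test_function:
  fixes u u' :: "real \<Rightarrow> real"
  assumes du: "\<And>x. (u has_real_derivative u' x) (at x)" and cu': "continuous_on UNIV u'"
    and su: "\<And>x. \<bar>x\<bar> > L \<Longrightarrow> u x = 0" and Phi: "test_function Phi"
  shows "(LBINT x. u x * Phi (Suc j) x) = - (LBINT x. u' x * Phi j x)"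
proof -
  obtain R where R: "\<And>k x. \<bar>x\<bar> > R \<Longrightarrow> Phi k x = 0" using test_function_support[OF Phi] by blast
  define L' where "L' = max (max L R) 0 + 1"
  have cu: "continuous_on UNIV u"
    using du by (meson DERIV_isCont continuous_at_imp_continuous_on)
  have cP: "continuous_on UNIV (Phi k)" for k by (rule continuous_on_test_function[OF Phi])
  have dP: "(Phi k has_real_derivative Phi (Suc k) x) (at x)" for k x
    using Phi unfolding test_function_def by blast
  let ?G = "\<lambda>x. u x * Phi j x"
  let ?g1 = "\<lambda>x. u' x * Phi j x"
  let ?g2 = "\<lambda>x. u x * Phi (Suc j) x"
  have FTC: "integral\<^sup>L lborel (\<lambda>x. indicator {-L'..L'} x *\<^sub>R (?g1 x + ?g2 x)) = ?G L' - ?G (-L')"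
  proof (rule integral_FTC_atLeastAtMost)
    show "- L' \<le> L'" unfolding L'_def by simp
    fix x
    have "(?G has_real_derivative (u' x * Phi j x + Phi (Suc j) x * u x)) (at x)"
      by (rule DERIV_mult[OF du dP])
    then have "(?G has_real_derivative (?g1 x + ?g2 x)) (at x within {-L'..L'})"
      by (simp add: has_field_derivative_at_within mult.commute)
    then show "(?G has_vector_derivative (?g1 x + ?g2 x)) (at x within {-L'..L'})"
      by (simp add: has_real_derivative_iff_has_vector_derivative)
  next
    show "continuous_on {-L'..L'} (\<lambda>x. ?g1 x + ?g2 x)"
      by (intro continuous_intros cu'[THEN continuous_on_subset] cu[THEN continuous_on_subset]
          cP[THEN continuous_on_subset]) auto
  qed
  have G0: "?G L' = 0" "?G (-L') = 0" using su[of L'] su[of "-L'"] unfolding L'_def by auto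
  have i1: "integrable lborel (\<lambda>x. indicator {-L'..L'} x *\<^sub>R ?g1 x)"
    by (rule borel_integrable_compact) (auto intro!: continuous_intros cu'[THEN continuous_on_subset] cP[THEN continuous_on_subset])
  have i2: "integrable lborel (\<lambda>x. indicator {-L'..L'} x *\<^sub>R ?g2 x)"
    by (rule borel_integrable_compact) (auto intro!: continuous_intros cu[THEN continuous_on_subset] cP[THEN continuous_on_subset])
  have restrict: "(\<lambda>x. indicator {-L'..L'} x *\<^sub>R g x) = g"
    if "\<And>x. \<bar>x\<bar> > max L R \<Longrightarrow> g x = 0" for g :: "real \<Rightarrow> real"
    using that unfolding L'_def by (force simp: indicator_def)
  have e1: "(\<lambda>x. indicator {-L'..L'} x *\<^sub>R ?g1 x) = ?g1" by (rule restrict) (simp add: R)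
  have e2: "(\<lambda>x. indicator {-L'..L'} x *\<^sub>R ?g2 x) = ?g2" by (rule restrict) (simp add: su)
  have "integral\<^sup>L lborel (\<lambda>x. indicator {-L'..L'} x *\<^sub>R (?g1 x + ?g2 x))
      = integral\<^sup>L lborel (\<lambda>x. indicator {-L'..L'} x *\<^sub>R ?g1 x) + integral\<^sup>L lborel (\<lambda>x. indicator {-L'..L'} x *\<^sub>R ?g2 x)"
    using i1 i2 by (simp add: distrib_left)
  then have "(LBINT x. ?g1 x) + (LBINT x. ?g2 x) = 0" using FTC G0 e1 e2 by simp
  then show ?thesis by simp
qed

lemma sobolev_of_compact_support:
  fixes Fd :: "nat \<Rightarrow> real \<Rightarrow> real"
  assumes der: "\<And>i x. i < m \<Longrightarrow> (Fd i has_real_derivative Fd (Suc i) x) (at x)"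
    and cont: "\<And>i. i \<le> m \<Longrightarrow> continuous_on UNIV (Fd i)"
    and supp: "\<And>i x. i \<le> m \<Longrightarrow> \<bar>x\<bar> > L \<Longrightarrow> Fd i x = 0"
  shows "sobolev m (\<lambda>x. complex_of_real (Fd 0 x)) (\<lambda>i x. complex_of_real (Fd i x))"
  unfolding sobolev_def
proof (intro conjI allI impI)
  show "(\<lambda>x. complex_of_real (Fd 0 x)) = (\<lambda>x. complex_of_real (Fd 0 x))" ..
  show "L2 (\<lambda>x. complex_of_real (Fd k x))" if "k \<le> m" for k
    by (rule L2_of_real_compact_support[OF cont[OF that] supp[OF that]])
  fix Phi k assume Phi: "test_function Phi" and k: "k \<le> m"
  have claim: "(LBINT x. Fd 0 x * Phi k x) = (-1) ^ i * (LBINT x. Fd i x * Phi (k - i) x)" if "i \<le> k" for i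
    using that
  proof (induction i)
    case 0 then show ?case by simp
  next
    case (Suc i)
    have ki: "k - i = Suc (k - Suc i)" using Suc.prems by simp
    have "(LBINT x. Fd i x * Phi (k - i) x) = - (LBINT x. Fd (Suc i) x * Phi (k - Suc i) x)"
      unfolding ki
      by (rule integral_by_parts_test_function[OF der cont supp Phi]) (use Suc.prems k in auto)
    then show ?case using Suc by simp
  qed
  have "(LINT x|lborel. complex_of_real (Fd 0 x) * complex_of_real (Phi k x))
      = complex_of_real (LBINT x. Fd 0 x * Phi k x)"
    by (simp flip: of_real_mult)
  also have "\<dots> = complex_of_real ((-1) ^ k * (LBINT x. Fd k x * Phi 0 x))"
    using claim[of k] by simp
  also have "\<dots> = (-1) ^ k * complex_of_real (LBINT x. Fd k x * Phi 0 x)"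
    by (simp only: of_real_mult of_real_power of_real_minus of_real_1)
  also have "\<dots> = (-1) ^ k * (LINT x|lborel. complex_of_real (Fd k x) * complex_of_real (Phi 0 x))"
    by (simp flip: of_real_mult)
  finally show "(LINT x|lborel. complex_of_real (Fd 0 x) * complex_of_real (Phi k x)) =
       (- 1) ^ k * (LINT x|lborel. complex_of_real (Fd k x) * complex_of_real (Phi 0 x))" .
qed

section \<open>Density of \<open>H\<^sup>m\<close> in \<open>L\<^sup>2(\<real>)\<close>\<close>

definition clamp01 :: "real \<Rightarrow> real" where "clamp01 t = max 0 (min 1 t)"

lemma continuous_on_clamp01: "continuous_on UNIV clamp01"
  unfolding clamp01_def by (intro continuous_intros)

lemma DERIV_glue:
  fixes f g h :: "real \<Rightarrow> real"
  assumes left: "\<And>x. c - 1 < x \<Longrightarrow> x \<le> c \<Longrightarrow> f x = g x"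
    and right: "\<And>x. c \<le> x \<Longrightarrow> x < c + 1 \<Longrightarrow> f x = h x"
    and g: "(g has_real_derivative D) (at c)" and h: "(h has_real_derivative D) (at c)"
  shows "(f has_real_derivative D) (at c)"
proof -
  have "(f has_real_derivative D) (at c within {..c})"
    by (rule has_field_derivative_transform_within[OF has_field_derivative_at_within[OF g], where d=1])
       (auto simp: left dist_real_def)
  moreover have "(f has_real_derivative D) (at c within {c..})"
    by (rule has_field_derivative_transform_within[OF has_field_derivative_at_within[OF h], where d=1])
       (auto simp: right dist_real_def)
  ultimately have "((\<lambda>y. (f y - f c) / (y - c)) \<longlongrightarrow> D) (at c within {..c} \<union> {c..})"
    unfolding has_field_derivative_iff by (simp add: Lim_within_Un)
  moreover have "{..c} \<union> {c..} = (UNIV :: real set)" by auto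
  ultimately show ?thesis unfolding has_field_derivative_iff by simp
qed

lemma DERIV_poly_clamp01:
  fixes Q :: "real poly"
  assumes z0: "poly (pderiv Q) 0 = 0" and z1: "poly (pderiv Q) 1 = 0"
  shows "((\<lambda>t. poly Q (clamp01 t)) has_real_derivative poly (pderiv Q) (clamp01 t)) (at t)"
proof -
  have Q: "(poly Q has_real_derivative poly (pderiv Q) s) (at s)" for s by (rule poly_DERIV)
  have const: "((\<lambda>_. poly Q c) has_real_derivative 0) (at s)" for c s by simp
  consider "t < 0" | "t = 0" | "0 < t \<and> t < 1" | "t = 1" | "t > 1" by linarith
  then show ?thesis
  proof cases
    case 1
    then have e: "poly (pderiv Q) (clamp01 t) = 0" using z0 by (simp add: clamp01_def)
    show ?thesis unfolding e
      by (rule has_field_derivative_transform_within_open[OF const[of 0], where S="{..<0}"])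
         (use 1 in \<open>auto simp: clamp01_def\<close>)
  next
    case 2
    have "((\<lambda>t. poly Q (clamp01 t)) has_real_derivative 0) (at 0)"
      by (rule DERIV_glue[OF _ _ const Q[of 0, unfolded z0]]) (auto simp: clamp01_def)
    then show ?thesis using 2 z0 by (simp add: clamp01_def)
  next
    case 3
    then have e: "clamp01 t = t" by (simp add: clamp01_def)
    show ?thesis unfolding e
      by (rule has_field_derivative_transform_within_open[OF Q, where S="{0<..<1}"])
         (use 3 in \<open>auto simp: clamp01_def\<close>)
  next
    case 4
    have "((\<lambda>t. poly Q (clamp01 t)) has_real_derivative 0) (at 1)"
      by (rule DERIV_glue[OF _ _ Q[of 1, unfolded z1] const]) (auto simp: clamp01_def)
    then show ?thesis using 4 z1 by (simp add: clamp01_def)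
  next
    case 5
    then have e: "poly (pderiv Q) (clamp01 t) = 0" using z1 by (simp add: clamp01_def)
    show ?thesis unfolding e
      by (rule has_field_derivative_transform_within_open[OF const[of 1], where S="{1<..}"])
         (use 5 in \<open>auto simp: clamp01_def\<close>)
  qed
qed

lemma dvd_pderiv_power:
  fixes p r :: "real poly"
  assumes "r ^ Suc n dvd p"
  shows "r ^ n dvd pderiv p"
proof -
  from assms obtain q where p: "p = r ^ Suc n * q" by (auto simp: dvd_def)
  have "pderiv p = r ^ Suc n * pderiv q + q * (smult (of_nat (Suc n)) (r ^ n) * pderiv r)"
    unfolding p pderiv_mult pderiv_power_Suc ..
  also have "\<dots> = r ^ n * (r * pderiv q + smult (of_nat (Suc n)) (q * pderiv r))"
    by (simp add: algebra_simps)
  finally show ?thesis by simp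
qed

lemma dvd_higher_pderiv:
  fixes p r :: "real poly"
  assumes "r ^ n dvd p" "i \<le> n"
  shows "r ^ (n - i) dvd (pderiv ^^ i) p"
  using assms(2)
proof (induction i)
  case 0 then show ?case using assms(1) by simp
next
  case (Suc i)
  then have "r ^ Suc (n - Suc i) dvd (pderiv ^^ i) p" using Suc_diff_Suc by fastforce
  then show ?case using dvd_pderiv_power by simp
qed

text \<open>A \<open>C\<^sup>m\<close> step function: \<open>step_poly m\<close> is an antiderivative of \<open>(t (1 - t))\<^sup>m\<^sup>+\<^sup>1\<close>, so it increases
  on \<open>[0, 1]\<close> and its first \<open>m\<close> derivatives vanish at \<open>0\<close> and \<open>1\<close>; extending it by constants
  outside \<open>[0, 1]\<close> (via \<open>clamp01\<close>) gives a \<open>C\<^sup>m\<close> function, whose \<open>j\<close>-th derivative is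
  \<open>smooth_step m j\<close>.\<close>
definition bump_poly :: "nat \<Rightarrow> real poly" where "bump_poly m = ([:0, 1:] * [:1, -1:]) ^ Suc m"

lemma poly_bump_poly: "poly (bump_poly m) t = (t * (1 - t)) ^ Suc m"
proof -
  have "poly ([:0, 1:] * [:1, -1:]) t = t * (1 - t)" by (simp add: algebra_simps)
  then show ?thesis by (simp only: bump_poly_def poly_power)
qed

lemma poly_higher_pderiv_eq_0:
  fixes p :: "real poly"
  assumes "[:-c, 1:] ^ Suc m dvd p" "i \<le> m"
  shows "poly ((pderiv ^^ i) p) c = 0"
proof -
  have "[:-c, 1:] ^ (Suc m - i) dvd (pderiv ^^ i) p"
    by (rule dvd_higher_pderiv[OF assms(1)]) (use assms(2) in simp)
  then have "[:-c, 1:] dvd (pderiv ^^ i) p"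
    using assms(2) by (metis dvd_power dvd_trans zero_less_diff less_Suc_eq_le)
  then show ?thesis by (simp add: dvd_iff_poly_eq_0)
qed

lemma higher_pderiv_bump_poly_vanish:
  assumes "i \<le> m"
  shows "poly ((pderiv ^^ i) (bump_poly m)) 0 = 0" "poly ((pderiv ^^ i) (bump_poly m)) 1 = 0"
proof -
  have "[:0, 1:] ^ Suc m dvd bump_poly m" unfolding bump_poly_def power_mult_distrib by (rule dvd_triv_left)
  then show "poly ((pderiv ^^ i) (bump_poly m)) 0 = 0" using poly_higher_pderiv_eq_0[of 0 m _ i] assms by simp
  have "([:1, -1:] :: real poly) = smult (-1) [:- 1, 1:]" by simp
  then have "([:1, -1:] :: real poly) ^ Suc m = smult ((-1) ^ Suc m) ([:- 1, 1:] ^ Suc m)"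
    by (simp only: smult_power)
  then have "[:- 1, 1:] ^ Suc m dvd ([:1, -1:] :: real poly) ^ Suc m" by (metis dvd_refl dvd_smult)
  then have "[:- 1, 1:] ^ Suc m dvd bump_poly m"
    unfolding bump_poly_def power_mult_distrib by (rule dvd_mult)
  then show "poly ((pderiv ^^ i) (bump_poly m)) 1 = 0" by (rule poly_higher_pderiv_eq_0[OF _ assms])
qed

definition poly_antideriv :: "real poly \<Rightarrow> real poly" where
  "poly_antideriv p = Poly (0 # map (\<lambda>i. coeff p i / of_nat (Suc i)) [0..<Suc (degree p)])"

lemma pderiv_poly_antideriv: "pderiv (poly_antideriv p) = p"
proof (subst poly_eq_iff, intro allI)
  fix n
  show "coeff (pderiv (poly_antideriv p)) n = coeff p n"
  proof (cases "n \<le> degree p")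
    case True
    then show ?thesis
      unfolding coeff_pderiv poly_antideriv_def by (simp add: nth_default_def del: upt_Suc)
  next
    case False
    then show ?thesis
      unfolding coeff_pderiv poly_antideriv_def by (simp add: nth_default_def coeff_eq_0 del: upt_Suc)
  qed
qed

definition step_poly :: "nat \<Rightarrow> real poly" where "step_poly m = poly_antideriv (bump_poly m)"

lemma step_poly_increasing: "poly (step_poly m) 0 < poly (step_poly m) 1"
proof -
  have "\<exists>z. 0 < z \<and> z < 1 \<and> poly (step_poly m) 1 - poly (step_poly m) 0 = (1 - 0) * poly (pderiv (step_poly m)) z"
    by (rule MVT2) auto
  then obtain z where z: "0 < z" "z < 1" "poly (step_poly m) 1 - poly (step_poly m) 0 = poly (bump_poly m) z"
    unfolding step_poly_def pderiv_poly_antideriv by auto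
  have "poly (bump_poly m) z > 0" unfolding poly_bump_poly using z by simp
  then show ?thesis using z by simp
qed

definition smooth_step :: "nat \<Rightarrow> nat \<Rightarrow> real \<Rightarrow> real" where
  "smooth_step m j t = poly ((pderiv ^^ j) (step_poly m)) (clamp01 t)"

lemma DERIV_smooth_step:
  assumes "j \<le> m"
  shows "(smooth_step m j has_real_derivative smooth_step m (Suc j) t) (at t)"
proof -
  have e: "pderiv ((pderiv ^^ j) (step_poly m)) = (pderiv ^^ j) (bump_poly m)"
    unfolding step_poly_def by (induction j) (simp_all add: pderiv_poly_antideriv)
  have e2: "(pderiv ^^ Suc j) (step_poly m) = pderiv ((pderiv ^^ j) (step_poly m))" by simp
  show ?thesis
    unfolding smooth_step_def e2
    by (rule DERIV_poly_clamp01) (simp_all only: e higher_pderiv_bump_poly_vanish[OF assms])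
qed

lemma continuous_on_smooth_step: "continuous_on UNIV (smooth_step m j)"
  unfolding smooth_step_def
  by (rule continuous_on_compose2[OF _ continuous_on_clamp01]) (auto intro: continuous_intros)

lemma smooth_step_left: "t \<le> 0 \<Longrightarrow> smooth_step m j t = poly ((pderiv ^^ j) (step_poly m)) 0"
  unfolding smooth_step_def clamp01_def by simp

lemma smooth_step_right: "t \<ge> 1 \<Longrightarrow> smooth_step m j t = poly ((pderiv ^^ j) (step_poly m)) 1"
  unfolding smooth_step_def clamp01_def by simp

lemma AE_zero_of_integral_interval_zero:
  fixes g :: "real \<Rightarrow> 'b::euclidean_space"
  assumes int: "\<And>a b. g integrable_on {a..b}" and zero: "\<And>a b. a < b \<Longrightarrow> integral {a..b} g = 0"
  shows "AE x in lborel. g x = 0"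
proof -
  have "g integrable_on cbox a b" for a b using int[of a b] by simp
  then obtain N where N: "negligible N"
    and Nd: "\<And>x e. \<lbrakk>x \<notin> N; 0 < e\<rbrakk> \<Longrightarrow> \<exists>d>0. \<forall>h. 0 < h \<and> h < d \<longrightarrow>
               norm (integral (cbox x (x + h *\<^sub>R One)) g /\<^sub>R h ^ DIM(real) - g x) < e"
    using integrable_ccontinuous_explicit[of g] by blast
  have gz: "g x = 0" if x: "x \<notin> N" for x
  proof (rule ccontr)
    assume "g x \<noteq> 0"
    then have e: "0 < norm (g x)" by simp
    obtain d where d: "d > 0" and dd: "\<And>h. 0 < h \<and> h < d \<Longrightarrow>
        norm (integral (cbox x (x + h *\<^sub>R One)) g /\<^sub>R h ^ DIM(real) - g x) < norm (g x)"
      using Nd[OF x e] by blast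
    have "norm (integral (cbox x (x + (d/2) *\<^sub>R One)) g /\<^sub>R (d/2) ^ DIM(real) - g x) < norm (g x)"
      using dd[of "d/2"] d by simp
    moreover have "integral (cbox x (x + (d/2) *\<^sub>R One)) g = 0"
      using zero[of x "x + d/2"] d by simp
    ultimately show False by simp
  qed
  have "N \<in> null_sets lebesgue" using N by (simp add: negligible_iff_null_sets)
  then have "AE x in lebesgue. x \<notin> N" by (rule AE_not_in)
  then have "AE x in lborel. x \<notin> N" by (simp add: AE_completion_iff)
  then show ?thesis by eventually_elim (use gz in auto)
qed

lemma AE_zero_of_interval_integrals_zero:
  assumes g: "L2 g"
    and z: "\<And>a b. a < b \<Longrightarrow> (LINT x|lborel. complex_of_real (indicator {a<..b} x) * g x) = 0"
  shows "AE x in lborel. g x = 0"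
proof -
  have si: "set_integrable lborel {a..b} g" for a b
  proof -
    have "integrable lborel (\<lambda>x. complex_of_real (indicator {a..b} x) * g x)"
      by (rule L2_integrable_mult[OF L2_indicator_Icc g])
    then show ?thesis unfolding set_integrable_def by (simp add: scaleR_conv_of_real)
  qed
  have iz: "integral {a..b} g = 0" if ab: "a < b" for a b
  proof -
    have "integral {a..b} g = (LINT x:{a..b}|lborel. g x)"
      by (rule set_borel_integral_eq_integral(2)[OF si, symmetric])
    also have "\<dots> = (LINT x|lborel. complex_of_real (indicator {a..b} x) * g x)"
      unfolding set_lebesgue_integral_def by (simp add: scaleR_conv_of_real)
    also have "\<dots> = (LINT x|lborel. complex_of_real (indicator {a<..b} x) * g x)"
    proof (rule integral_cong_AE)
      show "(\<lambda>x. complex_of_real (indicator {a..b} x) * g x) \<in> borel_measurable lborel"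
        using L2_borel_measurable[OF g] by simp
      show "(\<lambda>x. complex_of_real (indicator {a<..b} x) * g x) \<in> borel_measurable lborel"
        using L2_borel_measurable[OF g] by simp
      show "AE x in lborel. complex_of_real (indicator {a..b} x) * g x = complex_of_real (indicator {a<..b} x) * g x"
        using AE_lborel_singleton[of a] by eventually_elim (auto simp: indicator_def)
    qed
    also have "\<dots> = 0" by (rule z[OF ab])
    finally show ?thesis .
  qed
  show ?thesis
    by (rule AE_zero_of_integral_interval_zero)
       (use set_borel_integral_eq_integral(1)[OF si] iz in auto)
qed

text \<open>\<open>plateau m a b n 0\<close> is a compactly supported \<open>C\<^sup>m\<close> function that rises from \<open>0\<close> near \<open>a\<close> and
  falls back near \<open>b\<close>, on scale \<open>1 / (n + 1)\<close>; it tends boundedly to a nonzero multiple of the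
  indicator of \<open>(a, b]\<close>. \<open>plateau m a b n i\<close> is its \<open>i\<close>-th derivative.\<close>
definition plateau :: "nat \<Rightarrow> real \<Rightarrow> real \<Rightarrow> nat \<Rightarrow> nat \<Rightarrow> real \<Rightarrow> real" where
  "plateau m a b n i x = (real (Suc n)) ^ i * (smooth_step m i (real (Suc n) * (x - a)) - smooth_step m i (real (Suc n) * (x - b)))"

lemma plateau_support:
  assumes ab: "a < b" and x: "\<bar>x\<bar> > max \<bar>a\<bar> (\<bar>b\<bar> + 1)"
  shows "plateau m a b n i x = 0"
proof -
  have k1: "real (Suc n) \<ge> 1" by simp
  consider "x < a" | "x > b + 1" using x ab by (cases "x \<ge> 0") auto
  then show ?thesis
  proof cases
    case 1
    have "real (Suc n) * (x - a) \<le> 0" "real (Suc n) * (x - b) \<le> 0"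
      using 1 ab by (simp_all add: mult_nonneg_nonpos)
    then show ?thesis unfolding plateau_def by (simp add: smooth_step_left)
  next
    case 2
    have "x - a \<le> real (Suc n) * (x - a)"
      using mult_right_mono[of 1 "real (Suc n)" "x - a"] 2 ab by simp
    then have "1 \<le> real (Suc n) * (x - a)" using 2 ab by linarith
    moreover have "x - b \<le> real (Suc n) * (x - b)"
      using mult_right_mono[of 1 "real (Suc n)" "x - b"] 2 ab by simp
    then have "1 \<le> real (Suc n) * (x - b)" using 2 ab by linarith
    ultimately show ?thesis unfolding plateau_def by (simp add: smooth_step_right)
  qed
qed

lemma sobolev_plateau:
  assumes ab: "a < b"
  shows "sobolev m (\<lambda>x. complex_of_real (plateau m a b n 0 x)) (\<lambda>i x. complex_of_real (plateau m a b n i x))"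
proof (rule sobolev_of_compact_support)
  fix i x assume i: "i < m"
  let ?k = "real (Suc n)"
  have d1: "((\<lambda>x. smooth_step m i (?k * (x - a))) has_real_derivative smooth_step m (Suc i) (?k * (x - a)) * ?k) (at x)"
    by (rule DERIV_chain2[OF DERIV_smooth_step]) (use i in \<open>auto intro!: derivative_eq_intros\<close>)
  have d2: "((\<lambda>x. smooth_step m i (?k * (x - b))) has_real_derivative smooth_step m (Suc i) (?k * (x - b)) * ?k) (at x)"
    by (rule DERIV_chain2[OF DERIV_smooth_step]) (use i in \<open>auto intro!: derivative_eq_intros\<close>)
  have "((\<lambda>x. ?k ^ i * (smooth_step m i (?k * (x - a)) - smooth_step m i (?k * (x - b)))) has_real_derivative
        ?k ^ i * (smooth_step m (Suc i) (?k * (x - a)) * ?k - smooth_step m (Suc i) (?k * (x - b)) * ?k)) (at x)"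
    by (intro DERIV_cmult DERIV_diff d1 d2)
  then show "(plateau m a b n i has_real_derivative plateau m a b n (Suc i) x) (at x)"
    unfolding plateau_def by (simp add: algebra_simps)
next
  fix i assume "i \<le> m"
  show "continuous_on UNIV (plateau m a b n i)"
    unfolding plateau_def
    by (intro continuous_intros continuous_on_compose2[OF continuous_on_smooth_step]) auto
next
  fix i x assume "i \<le> m" "\<bar>x\<bar> > max \<bar>a\<bar> (\<bar>b\<bar> + 1)"
  then show "plateau m a b n i x = 0" using plateau_support[OF ab] by blast
qed

lemma eventually_one_le_Suc_mult:
  assumes "y > 0"
  shows "eventually (\<lambda>n. real (Suc n) * y \<ge> 1) sequentially"
proof -
  obtain N :: nat where N: "real N > 1 / y" using reals_Archimedean2 by blast
  show ?thesis
  proof (rule eventually_sequentiallyI[of N])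
    fix n assume "N \<le> n"
    then have "real (Suc n) > 1 / y" using N by linarith
    then show "real (Suc n) * y \<ge> 1" using assms by (simp add: field_simps)
  qed
qed

lemma plateau_tendsto_indicator:
  assumes ab: "a < b"
  shows "(\<lambda>n. plateau m a b n 0 x) \<longlonglongrightarrow> (poly (step_poly m) 1 - poly (step_poly m) 0) * indicator {a<..b} x"
proof -
  have S0: "smooth_step m 0 t = poly (step_poly m) (clamp01 t)" for t unfolding smooth_step_def by simp
  have L: "\<And>t. t \<le> 0 \<Longrightarrow> smooth_step m 0 t = poly (step_poly m) 0" and R: "\<And>t. t \<ge> 1 \<Longrightarrow> smooth_step m 0 t = poly (step_poly m) 1"
    using smooth_step_left[of _ m 0] smooth_step_right[of _ m 0] by simp_all
  note ev = eventually_one_le_Suc_mult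
  consider "x \<le> a" | "a < x \<and> x \<le> b" | "x > b" by linarith
  then show ?thesis
  proof cases
    case 1
    have "plateau m a b n 0 x = 0" for n
    proof -
      have "real (Suc n) * (x - a) \<le> 0" "real (Suc n) * (x - b) \<le> 0"
        using 1 ab by (simp_all add: mult_nonneg_nonpos)
      then show ?thesis unfolding plateau_def using L by simp
    qed
    then show ?thesis using 1 by simp
  next
    case 2
    have e1: "eventually (\<lambda>n. real (Suc n) * (x - a) \<ge> 1) sequentially" using ev[of "x - a"] 2 by simp
    have "eventually (\<lambda>n. plateau m a b n 0 x = poly (step_poly m) 1 - poly (step_poly m) 0) sequentially"
      using e1
    proof (rule eventually_mono)
      fix n assume "1 \<le> real (Suc n) * (x - a)"
      moreover have "real (Suc n) * (x - b) \<le> 0" using 2 by (simp add: mult_nonneg_nonpos)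
      ultimately show "plateau m a b n 0 x = poly (step_poly m) 1 - poly (step_poly m) 0"
        unfolding plateau_def using L R by simp
    qed
    then show ?thesis using 2 by (simp add: tendsto_eventually)
  next
    case 3
    have e1: "eventually (\<lambda>n. real (Suc n) * (x - a) \<ge> 1 \<and> real (Suc n) * (x - b) \<ge> 1) sequentially"
      using eventually_conj[OF ev[of "x - a"] ev[of "x - b"]] 3 ab by simp
    have "eventually (\<lambda>n. plateau m a b n 0 x = 0) sequentially"
      using e1
    proof (rule eventually_mono)
      fix n assume "1 \<le> real (Suc n) * (x - a) \<and> 1 \<le> real (Suc n) * (x - b)"
      then show "plateau m a b n 0 x = 0" unfolding plateau_def using R by simp
    qed
    then show ?thesis using 3 by (simp add: tendsto_eventually)
  qed
qed

lemma plateau_bounded: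
  obtains B where "\<And>n x. \<bar>plateau m a b n 0 x\<bar> \<le> B"
proof -
  have "compact (poly (step_poly m) ` {0..1})"
    by (rule compact_continuous_image) (auto intro: continuous_intros)
  then obtain B where B: "\<And>t. t \<in> {0..1} \<Longrightarrow> \<bar>poly (step_poly m) t\<bar> \<le> B"
    using compact_imp_bounded bounded_iff by (metis image_eqI real_norm_def)
  have cl: "clamp01 t \<in> {0..1}" for t unfolding clamp01_def by auto
  have "\<bar>plateau m a b n 0 x\<bar> \<le> 2 * B" for n x
  proof -
    have "\<bar>plateau m a b n 0 x\<bar> \<le> \<bar>poly (step_poly m) (clamp01 (real (Suc n) * (x - a)))\<bar> + \<bar>poly (step_poly m) (clamp01 (real (Suc n) * (x - b)))\<bar>"
      unfolding plateau_def smooth_step_def by simp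
    moreover have "\<bar>poly (step_poly m) (clamp01 (real (Suc n) * (x - a)))\<bar> \<le> B" by (rule B[OF cl])
    moreover have "\<bar>poly (step_poly m) (clamp01 (real (Suc n) * (x - b)))\<bar> \<le> B" by (rule B[OF cl])
    ultimately show ?thesis by linarith
  qed
  then show ?thesis using that by blast
qed

lemma tendsto_integral_plateau_mult:
  assumes ab: "a < b" and g: "L2 g"
  shows "(\<lambda>n. LINT x|lborel. complex_of_real (plateau m a b n 0 x) * g x) \<longlonglongrightarrow>
    (LINT x|lborel. complex_of_real ((poly (step_poly m) 1 - poly (step_poly m) 0) * indicator {a<..b} x) * g x)"
proof -
  define c where "c = poly (step_poly m) 1 - poly (step_poly m) 0"
  define L where "L = max \<bar>a\<bar> (\<bar>b\<bar> + 1)"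
  obtain B where B: "\<And>n x. \<bar>plateau m a b n 0 x\<bar> \<le> B" using plateau_bounded by blast
  define w where "w x = B * cmod (complex_of_real (indicator {-L..L} x) * g x)" for x
  have h1: "(\<lambda>x. complex_of_real (c * indicator {a<..b} x) * g x) \<in> borel_measurable lborel"
    using L2_borel_measurable[OF g] by simp
  have h2: "(\<lambda>x. complex_of_real (plateau m a b n 0 x) * g x) \<in> borel_measurable lborel" for n
    using L2_borel_measurable[OF g] L2_borel_measurable[OF sobolev_L2[OF sobolev_plateau[OF ab]]] by simp
  have h3: "integrable lborel w"
    unfolding w_def by (intro integrable_mult_right integrable_norm L2_integrable_mult[OF L2_indicator_Icc g])
  have h4: "AE x in lborel. (\<lambda>n. complex_of_real (plateau m a b n 0 x) * g x) \<longlonglongrightarrow> complex_of_real (c * indicator {a<..b} x) * g x"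
    by (intro AE_I2 tendsto_intros plateau_tendsto_indicator[OF ab, of m, folded c_def])
  have h5: "AE x in lborel. norm (complex_of_real (plateau m a b n 0 x) * g x) \<le> w x" for n
  proof (rule AE_I2)
    fix x
    show "norm (complex_of_real (plateau m a b n 0 x) * g x) \<le> w x"
    proof (cases "x \<in> {-L..L}")
      case True
      then show ?thesis unfolding w_def using B[of n x]
        by (simp add: norm_mult mult_right_mono)
    next
      case False
      then have "\<bar>x\<bar> > L" by auto
      then have "plateau m a b n 0 x = 0" using plateau_support[OF ab] unfolding L_def by blast
      then show ?thesis unfolding w_def using False by simp
    qed
  qed
  show ?thesis
    using integral_dominated_convergence[of "\<lambda>x. complex_of_real (c * indicator {a<..b} x) * g x" lborel
        "\<lambda>n x. complex_of_real (plateau m a b n 0 x) * g x" w, OF h1 h2 h3 h4 h5] by (simp add: c_def)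
qed

text \<open>Density of \<open>H\<^sup>m\<close>: orthogonality to the plateaus passes, by dominated convergence, to the
  indicators of intervals, and then Lebesgue differentiation forces \<open>h = 0\<close> a.e.\<close>
lemma AE_zero_of_orthogonal_sobolev:
  assumes h: "L2 h" and orth: "\<And>f Df. sobolev m f Df \<Longrightarrow> L2_inner f h = 0"
  shows "AE x in lborel. h x = 0"
proof -
  define g where "g x = cnj (h x)" for x
  have g: "L2 g" unfolding g_def by (rule L2_cnj[OF h])
  have z: "(LINT x|lborel. complex_of_real (indicator {a<..b} x) * g x) = 0" if ab: "a < b" for a b
  proof -
    define c where "c = poly (step_poly m) 1 - poly (step_poly m) 0"
    have c0: "c \<noteq> 0" unfolding c_def using step_poly_increasing[of m] by simp
    have "(LINT x|lborel. complex_of_real (plateau m a b n 0 x) * g x) = 0" for n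
      using orth[OF sobolev_plateau[OF ab, of m n]] unfolding L2_inner_def g_def .
    then have "(\<lambda>n. 0) \<longlonglongrightarrow> (LINT x|lborel. complex_of_real (c * indicator {a<..b} x) * g x)"
      using tendsto_integral_plateau_mult[OF ab g, of m, folded c_def] by simp
    then have "(LINT x|lborel. complex_of_real (c * indicator {a<..b} x) * g x) = 0"
      by (simp add: LIMSEQ_const_iff)
    then have "complex_of_real c * (LINT x|lborel. complex_of_real (indicator {a<..b} x) * g x) = 0"
      by (simp add: mult.assoc)
    then show ?thesis using c0 by simp
  qed
  have "AE x in lborel. g x = 0" by (rule AE_zero_of_interval_integrals_zero[OF g z])
  then show ?thesis unfolding g_def by simp
qed

section \<open>The operators \<open>A\<^sub>\<theta>\<close>\<close>

lemma opA_lincomb: "opA a m t (\<lambda>k x. Df k x + c * Dg k x) x = opA a m t Df x + c * opA a m t Dg x"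
  unfolding opA_def by (simp add: algebra_simps sum.distrib sum_distrib_left)

lemma opA_scale: "opA a m t (\<lambda>k x. c * Df k x) x = c * opA a m t Df x"
  unfolding opA_def by (simp add: algebra_simps sum_distrib_left)

lemma smooth_bounded_periodic_continuous:
  assumes "smooth_bounded_periodic a"
  shows "continuous_on UNIV a"
proof -
  from assms obtain F where F0: "F 0 0 = a"
    and D: "\<And>p. (F 0 0 has_derivative (\<lambda>h. fst h *\<^sub>R F (Suc 0) 0 p + snd h *\<^sub>R F 0 (Suc 0) p)) (at p)"
    unfolding smooth_bounded_periodic_def by blast
  have "\<And>p. isCont a p" using has_derivative_continuous[OF D] F0 by simp
  then show ?thesis by (simp add: continuous_at_imp_continuous_on)
qed

lemma smooth_bounded_periodic_bounded:
  fixes a :: "nat \<Rightarrow> real \<times> real \<Rightarrow> complex"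
  assumes "\<And>k. k \<le> m \<Longrightarrow> smooth_bounded_periodic (a k)"
  obtains M where "\<And>k p. k \<le> m \<Longrightarrow> cmod (a k p) \<le> M"
proof -
  have "\<forall>k\<in>{..m}. \<exists>M. \<forall>p. cmod (a k p) \<le> M"
  proof
    fix k assume "k \<in> {..m}"
    then obtain F :: "nat \<Rightarrow> nat \<Rightarrow> real \<times> real \<Rightarrow> complex"
      where "F 0 0 = a k" "\<forall>i j. bounded (range (F i j))"
      using assms[of k] unfolding smooth_bounded_periodic_def by auto
    then have "bounded (range (a k))" by metis
    then show "\<exists>M. \<forall>p. cmod (a k p) \<le> M" unfolding bounded_iff by auto
  qed
  then obtain M where M: "\<And>k p. k \<in> {..m} \<Longrightarrow> cmod (a k p) \<le> M k" by metis
  have "cmod (a k p) \<le> Max (M ` {..m})" if "k \<le> m" for k p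
  proof -
    have "cmod (a k p) \<le> M k" using M that by simp
    also have "M k \<le> Max (M ` {..m})" using that by (intro Max_ge) auto
    finally show ?thesis .
  qed
  then show ?thesis by (rule that)
qed

lemma L2_opA:
  assumes cont: "\<And>k. k \<le> m \<Longrightarrow> continuous_on UNIV (a k)"
    and bound: "\<And>k p. k \<le> m \<Longrightarrow> cmod (a k p) \<le> M"
    and f: "sobolev m f Df"
  shows "L2 (opA a m t Df)"
proof -
  have "L2 (\<lambda>x. a k (x, t * x) * Df k x)" if k: "k \<le> m" for k
  proof (rule L2_bounded_mult[OF sobolev_L2_deriv[OF f k]])
    show "(\<lambda>x. a k (x, t * x)) \<in> borel_measurable lborel"
      unfolding measurable_lborel2
      by (intro borel_measurable_continuous_onI continuous_on_compose2[OF cont[OF k]])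
         (auto intro!: continuous_intros)
  qed (rule bound[OF k])
  then have "L2 (\<lambda>x. \<Sum>k\<le>m. a k (x, t * x) * Df k x)"
    by (intro L2_sum) auto
  then show ?thesis unfolding opA_def by simp
qed

lemma norm_opA_diff_le:
  assumes bound: "\<And>k p. k \<le> m \<Longrightarrow> cmod (a k p) \<le> M"
  shows "cmod (opA a m s Df x - opA a m t Df x) \<le> (\<Sum>k\<le>m. 2 * M * cmod (Df k x))"
proof -
  have "opA a m s Df x - opA a m t Df x = (\<Sum>k\<le>m. (a k (x, s * x) - a k (x, t * x)) * Df k x)"
    unfolding opA_def by (simp add: algebra_simps sum_subtractf)
  also have "cmod \<dots> \<le> (\<Sum>k\<le>m. cmod ((a k (x, s * x) - a k (x, t * x)) * Df k x))"
    by (rule norm_sum)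
  also have "\<dots> \<le> (\<Sum>k\<le>m. 2 * M * cmod (Df k x))"
  proof (rule sum_mono)
    fix k assume k: "k \<in> {..m}"
    have "cmod (a k (x, s * x) - a k (x, t * x)) \<le> 2 * M"
      using norm_triangle_ineq4[of "a k (x, s * x)"] bound[of k] k by (smt (verit) atMost_iff)
    then show "cmod ((a k (x, s * x) - a k (x, t * x)) * Df k x) \<le> 2 * M * cmod (Df k x)"
      by (simp add: norm_mult mult_right_mono)
  qed
  finally show ?thesis .
qed

lemma opA_strong_convergence:
  assumes cont: "\<And>k. k \<le> m \<Longrightarrow> continuous_on UNIV (a k)"
    and bound: "\<And>k p. k \<le> m \<Longrightarrow> cmod (a k p) \<le> M"
    and f: "sobolev m f Df" and conv: "\<theta>s \<longlonglongrightarrow> \<theta>"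
  shows "(\<lambda>n. L2_norm (\<lambda>x. opA a m \<theta> Df x - opA a m (\<theta>s n) Df x)) \<longlonglongrightarrow> 0"
proof -
  define E where "E n x = opA a m \<theta> Df x - opA a m (\<theta>s n) Df x" for n x
  have Eeq: "E n x = (\<Sum>k\<le>m. (a k (x, \<theta> * x) - a k (x, \<theta>s n * x)) * Df k x)" for n x
    unfolding E_def opA_def by (simp add: algebra_simps sum_subtractf)
  have LE: "L2 (E n)" for n
    unfolding E_def by (rule L2_diff[OF L2_opA[OF cont bound f] L2_opA[OF cont bound f]])
  define w where "w x = (\<Sum>k\<le>m. (2 * M * cmod (Df k x))\<^sup>2) * real (card {..m})" for x
  have meas: "(\<lambda>x. (cmod (E n x))\<^sup>2) \<in> borel_measurable lborel" for n
    using L2_borel_measurable[OF LE[of n]] by simp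
  have w: "integrable lborel w"
    unfolding w_def
    by (intro integrable_mult_left integrable_sum)
       (use L2_integrable_square[OF sobolev_L2_deriv[OF f]] in \<open>auto simp: power_mult_distrib\<close>)
  have lim: "AE x in lborel. (\<lambda>n. (cmod (E n x))\<^sup>2) \<longlonglongrightarrow> 0"
  proof (rule AE_I2)
    fix x
    have "(\<lambda>n. E n x) \<longlonglongrightarrow> (\<Sum>k\<le>m. (a k (x, \<theta> * x) - a k (x, \<theta> * x)) * Df k x)"
      unfolding Eeq
    proof (intro tendsto_sum tendsto_mult tendsto_diff tendsto_const)
      fix k assume "k \<in> {..m}"
      moreover have "(\<lambda>n. (x, \<theta>s n * x)) \<longlonglongrightarrow> (x, \<theta> * x)"
        by (intro tendsto_intros conv)
      ultimately show "(\<lambda>n. a k (x, \<theta>s n * x)) \<longlonglongrightarrow> a k (x, \<theta> * x)"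
        using continuous_on_tendsto_compose[OF cont] by auto
    qed
    then show "(\<lambda>n. (cmod (E n x))\<^sup>2) \<longlonglongrightarrow> 0"
      using tendsto_power[OF tendsto_norm_zero, of "\<lambda>n. E n x" sequentially 2] by simp
  qed
  have dom: "AE x in lborel. norm ((cmod (E n x))\<^sup>2) \<le> w x" for n
  proof (rule AE_I2)
    fix x
    have "(cmod (E n x))\<^sup>2 \<le> (\<Sum>k\<le>m. 2 * M * cmod (Df k x))\<^sup>2"
      unfolding E_def by (rule power_mono[OF norm_opA_diff_le[OF bound] norm_ge_zero])
    also have "\<dots> \<le> w x" unfolding w_def by (rule sum_squared_le_sum_of_squares)
    finally show "norm ((cmod (E n x))\<^sup>2) \<le> w x" by simp
  qed
  have "(\<lambda>n. LINT x|lborel. (cmod (E n x))\<^sup>2) \<longlonglongrightarrow> (LINT x|lborel. 0)"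
    using integral_dominated_convergence[of "\<lambda>x. 0" lborel "\<lambda>n x. (cmod (E n x))\<^sup>2" w, OF _ meas w lim dom]
    by simp
  then have "(\<lambda>n. sqrt (LINT x|lborel. (cmod (E n x))\<^sup>2)) \<longlonglongrightarrow> sqrt 0"
    by (intro tendsto_real_sqrt) simp
  then show ?thesis unfolding L2_norm_def E_def by simp
qed

section \<open>Resolvent and spectrum of a self-adjoint \<open>A\<^sub>\<theta>\<close>\<close>

text \<open>An element of \<open>H\<^sup>m\<close> is represented by the family \<open>Df\<close> of its weak derivatives, \<open>Df 0\<close> being
  the function itself.\<close>
definition in_Hm :: "nat \<Rightarrow> (nat \<Rightarrow> real \<Rightarrow> complex) \<Rightarrow> bool" where
  "in_Hm m Df \<longleftrightarrow> sobolev m (Df 0) Df"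

definition opA_shift :: "(nat \<Rightarrow> real \<times> real \<Rightarrow> complex) \<Rightarrow> nat \<Rightarrow> real \<Rightarrow> complex
                         \<Rightarrow> (nat \<Rightarrow> real \<Rightarrow> complex) \<Rightarrow> real \<Rightarrow> complex" where
  "opA_shift a m t z Df x = opA a m t Df x - z * Df 0 x"

lemma sobolev_iff_in_Hm: "sobolev m f Df \<longleftrightarrow> in_Hm m Df \<and> Df 0 = f"
  unfolding in_Hm_def using sobolev_deriv_0 by blast

lemma in_Hm_L2: "in_Hm m Df \<Longrightarrow> L2 (Df 0)"
  unfolding in_Hm_def by (rule sobolev_L2)

lemma in_Hm_lincomb: "in_Hm m Df \<Longrightarrow> in_Hm m Dg \<Longrightarrow> in_Hm m (\<lambda>k x. Df k x + c * Dg k x)"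
  unfolding in_Hm_def using sobolev_lincomb by blast

lemma in_Hm_scale: "in_Hm m Df \<Longrightarrow> in_Hm m (\<lambda>k x. c * Df k x)"
  unfolding in_Hm_def using sobolev_scale by blast

lemma in_Hm_zero: "in_Hm m (\<lambda>k x. 0)"
  unfolding in_Hm_def using sobolev_zero by simp

lemma opA_shift_lincomb:
  "opA_shift a m t z (\<lambda>k x. Df k x + c * Dg k x) = (\<lambda>x. opA_shift a m t z Df x + c * opA_shift a m t z Dg x)"
  unfolding opA_shift_def by (simp add: opA_lincomb algebra_simps)

lemma opA_shift_scale: "opA_shift a m t z (\<lambda>k x. c * Df k x) = (\<lambda>x. c * opA_shift a m t z Df x)"
  unfolding opA_shift_def by (simp add: opA_scale algebra_simps)

locale self_adjoint_opA =
  fixes m :: nat and a :: "nat \<Rightarrow> real \<times> real \<Rightarrow> complex" and t :: real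
  assumes L2_opA_sobolev: "\<And>f Df. sobolev m f Df \<Longrightarrow> L2 (opA a m t Df)"
    and self_adjoint: "self_adjoint_op a m t"
begin

lemma L2_opA_in_Hm: "in_Hm m Df \<Longrightarrow> L2 (opA a m t Df)"
  unfolding in_Hm_def by (rule L2_opA_sobolev)

lemma L2_opA_shift: "in_Hm m Df \<Longrightarrow> L2 (opA_shift a m t z Df)"
  unfolding opA_shift_def[abs_def] by (intro L2_diff L2_opA_in_Hm L2_cmult in_Hm_L2)

lemma opA_symmetric:
  "in_Hm m Df \<Longrightarrow> in_Hm m Dg \<Longrightarrow> L2_inner (opA a m t Df) (Dg 0) = L2_inner (Df 0) (opA a m t Dg)"
  using self_adjoint unfolding self_adjoint_op_def in_Hm_def by blast

lemma in_Hm_of_adjoint: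
  assumes "L2 g" "L2 h" "\<And>Df. in_Hm m Df \<Longrightarrow> L2_inner (opA a m t Df) g = L2_inner (Df 0) h"
  obtains Dg where "in_Hm m Dg" "Dg 0 = g"
proof -
  have "\<forall>f Df. sobolev m f Df \<longrightarrow> L2_inner (opA a m t Df) g = L2_inner f h"
    using assms(3) unfolding sobolev_iff_in_Hm by blast
  then obtain Dg where "sobolev m g Dg"
    using self_adjoint assms(1,2) unfolding self_adjoint_op_def by blast
  then show ?thesis using that unfolding sobolev_iff_in_Hm by blast
qed

lemma AE_zero_of_orthogonal_in_Hm:
  assumes "L2 h" "\<And>Df. in_Hm m Df \<Longrightarrow> L2_inner (Df 0) h = 0"
  shows "AE x in lborel. h x = 0"
  by (rule AE_zero_of_orthogonal_sobolev[where m=m, OF assms(1)])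
     (use assms(2) in \<open>auto simp: sobolev_iff_in_Hm\<close>)

lemma opA_shift_symmetric:
  assumes "in_Hm m Df" "in_Hm m Dg"
  shows "L2_inner (opA_shift a m t z Df) (Dg 0) = L2_inner (Df 0) (opA_shift a m t (cnj z) Dg)"
proof -
  have "L2_inner (opA_shift a m t z Df) (Dg 0) = L2_inner (opA a m t Df) (Dg 0) - z * L2_inner (Df 0) (Dg 0)"
    unfolding opA_shift_def[abs_def] using assms in_Hm_L2 L2_opA_in_Hm
    by (simp add: L2_inner_diff_left L2_cmult L2_inner_scale_left)
  also have "\<dots> = L2_inner (Df 0) (opA_shift a m t (cnj z) Dg)"
    unfolding opA_shift_def[abs_def] using assms in_Hm_L2 L2_opA_in_Hm opA_symmetric[OF assms]
    by (simp add: L2_inner_diff_right L2_cmult L2_inner_scale_right)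
  finally show ?thesis .
qed

lemma Im_inner_opA_shift_self:
  assumes "in_Hm m Df" "Im z = 0"
  shows "Im (L2_inner (Df 0) (opA_shift a m t z Df)) = 0"
proof -
  have "cnj z = z" using assms(2) by (simp add: complex_eq_iff)
  then have "L2_inner (Df 0) (opA_shift a m t z Df) = cnj (L2_inner (Df 0) (opA_shift a m t z Df))"
    using opA_shift_symmetric[OF assms(1) assms(1), of z] L2_inner_cnj by metis
  then show ?thesis by (metis cnj.sel(2) neg_equal_zero)
qed

lemma Im_le_norm_opA_shift:
  assumes f: "in_Hm m Df"
  shows "\<bar>Im z\<bar> * L2_norm (Df 0) \<le> L2_norm (opA_shift a m t z Df)"
proof -
  let ?u = "opA_shift a m t (of_real (Re z)) Df"
  let ?s = "- (\<i> * complex_of_real (Im z))"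
  have Lu: "L2 ?u" and Lf: "L2 (Df 0)" using f by (simp_all add: L2_opA_shift in_Hm_L2)
  have eq: "opA_shift a m t z Df = (\<lambda>x. ?u x + ?s * Df 0 x)"
    unfolding opA_shift_def by (rule ext) (simp add: complex_eq_iff algebra_simps)
  have "Im (L2_inner ?u (Df 0)) = 0"
    using Im_inner_opA_shift_self[OF f, of "of_real (Re z)"] L2_inner_cnj[of ?u "Df 0"] by simp
  then have "Re (cnj ?s * L2_inner ?u (Df 0)) = 0" by simp
  then have "(L2_norm (opA_shift a m t z Df))\<^sup>2 = (L2_norm ?u)\<^sup>2 + (Im z)\<^sup>2 * (L2_norm (Df 0))\<^sup>2"
    unfolding eq L2_norm_add_scaled_square[OF Lu Lf] by (simp add: norm_mult)
  then have "(\<bar>Im z\<bar> * L2_norm (Df 0))\<^sup>2 \<le> (L2_norm (opA_shift a m t z Df))\<^sup>2"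
    by (simp add: power_mult_distrib)
  then show ?thesis by (rule power2_le_imp_le[OF _ L2_norm_nonneg])
qed


text \<open>The graph is closed: the limit satisfies the adjoint identity, so \<open>self_adjoint_op\<close> puts it
  in \<open>H\<^sup>m\<close>.\<close>
lemma opA_shift_closed_graph:
  assumes Dn: "\<And>n. in_Hm m (Dn n)" and LF: "L2 F" and LW: "L2 W"
    and fF: "(\<lambda>n. L2_norm (\<lambda>x. Dn n 0 x - F x)) \<longlonglongrightarrow> 0"
    and bW: "(\<lambda>n. L2_norm (\<lambda>x. opA_shift a m t z (Dn n) x - W x)) \<longlonglongrightarrow> 0"
  obtains DF where "in_Hm m DF" "DF 0 = F" "AE x in lborel. opA_shift a m t z DF x = W x"
proof -
  have adj: "L2_inner (opA a m t Dg) F = L2_inner (Dg 0) (\<lambda>x. W x + z * F x)" if Dg: "in_Hm m Dg" for Dg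
  proof -
    have Lg: "L2 (Dg 0)" by (rule in_Hm_L2[OF Dg])
    have "L2_inner (opA a m t Dg) (Dn n 0) = L2_inner (Dg 0) (\<lambda>x. opA_shift a m t z (Dn n) x + z * Dn n 0 x)" for n
      using opA_symmetric[OF Dg Dn] unfolding opA_shift_def by simp
    also have "L2_inner (Dg 0) (\<lambda>x. opA_shift a m t z (Dn n) x + z * Dn n 0 x) = L2_inner (Dg 0) (opA_shift a m t z (Dn n)) + cnj z * L2_inner (Dg 0) (Dn n 0)" for n
      using L2_opA_shift[OF Dn] in_Hm_L2[OF Dn] Lg by (simp add: L2_inner_add_right L2_cmult L2_inner_scale_right)
    finally have eq: "L2_inner (opA a m t Dg) (Dn n 0) = L2_inner (Dg 0) (opA_shift a m t z (Dn n)) + cnj z * L2_inner (Dg 0) (Dn n 0)" for n .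
    have "(\<lambda>n. L2_inner (opA a m t Dg) (Dn n 0)) \<longlonglongrightarrow> L2_inner (opA a m t Dg) F"
      by (rule tendsto_L2_inner_right[OF in_Hm_L2[OF Dn] LF L2_opA_in_Hm[OF Dg] fF])
    moreover have "(\<lambda>n. L2_inner (Dg 0) (opA_shift a m t z (Dn n)) + cnj z * L2_inner (Dg 0) (Dn n 0)) \<longlonglongrightarrow>
               L2_inner (Dg 0) W + cnj z * L2_inner (Dg 0) F"
      by (intro tendsto_add tendsto_mult tendsto_const tendsto_L2_inner_right[OF L2_opA_shift[OF Dn] LW Lg bW]
          tendsto_L2_inner_right[OF in_Hm_L2[OF Dn] LF Lg fF])
    ultimately have "L2_inner (opA a m t Dg) F = L2_inner (Dg 0) W + cnj z * L2_inner (Dg 0) F"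
      unfolding eq using LIMSEQ_unique by blast
    also have "\<dots> = L2_inner (Dg 0) (\<lambda>x. W x + z * F x)"
      using LW LF Lg by (simp add: L2_inner_add_right L2_cmult L2_inner_scale_right)
    finally show ?thesis .
  qed
  obtain DF where DF: "in_Hm m DF" and DF0: "DF 0 = F"
    using in_Hm_of_adjoint[OF LF L2_add[OF LW L2_cmult[OF LF]] adj] by blast
  have LBD: "L2 (opA_shift a m t z DF)" by (rule L2_opA_shift[OF DF])
  have "AE x in lborel. opA_shift a m t z DF x - W x = 0"
  proof (rule AE_zero_of_orthogonal_in_Hm[OF L2_diff[OF LBD LW]])
    fix Dg assume Dg: "in_Hm m Dg"
    have Lg: "L2 (Dg 0)" by (rule in_Hm_L2[OF Dg])
    have "(\<lambda>x. opA_shift a m t z DF x - W x) = (\<lambda>x. opA a m t DF x - (W x + z * F x))"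
      unfolding opA_shift_def DF0 by (auto simp: fun_eq_iff)
    then have "L2_inner (Dg 0) (\<lambda>x. opA_shift a m t z DF x - W x)
        = L2_inner (Dg 0) (opA a m t DF) - L2_inner (Dg 0) (\<lambda>x. W x + z * F x)"
      using Lg L2_opA_in_Hm[OF DF] L2_add[OF LW L2_cmult[OF LF]] by (simp add: L2_inner_diff_right)
    also have "L2_inner (Dg 0) (opA a m t DF) = L2_inner (opA a m t Dg) F"
      using opA_symmetric[OF Dg DF] DF0 by simp
    finally show "L2_inner (Dg 0) (\<lambda>x. opA_shift a m t z DF x - W x) = 0" using adj[OF Dg] by simp
  qed
  then show ?thesis using that[OF DF DF0] by (auto elim: AE_mp)
qed

lemma opA_shift_closed_range:
  assumes c: "c > 0"
    and lower: "\<And>Df. in_Hm m Df \<Longrightarrow> c * L2_norm (Df 0) \<le> L2_norm (opA_shift a m t z Df)"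
    and Dn: "\<And>n. in_Hm m (Dn n)"
    and Cauchy: "\<And>e. e > 0 \<Longrightarrow> \<exists>N. \<forall>j\<ge>N. \<forall>k\<ge>N.
                   L2_norm (\<lambda>x. opA_shift a m t z (Dn j) x - opA_shift a m t z (Dn k) x) < e"
  obtains DF where "in_Hm m DF"
    "(\<lambda>n. L2_norm (\<lambda>x. opA_shift a m t z (Dn n) x - opA_shift a m t z DF x)) \<longlonglongrightarrow> 0"
proof -
  define f where "f n = Dn n 0" for n
  define b where "b n = opA_shift a m t z (Dn n)" for n
  have Lf: "L2 (f n)" for n unfolding f_def by (rule in_Hm_L2[OF Dn])
  have Lb: "L2 (b n)" for n unfolding b_def by (rule L2_opA_shift[OF Dn])
  have "\<exists>N. \<forall>j\<ge>N. \<forall>k\<ge>N. L2_norm (\<lambda>x. f j x - f k x) < e" if e: "e > 0" for e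
  proof -
    obtain N where N: "\<And>j k. j \<ge> N \<Longrightarrow> k \<ge> N \<Longrightarrow> L2_norm (\<lambda>x. b j x - b k x) < e * c"
      using Cauchy[of "e * c"] e c unfolding b_def by auto
    have "L2_norm (\<lambda>x. f j x - f k x) < e" if "j \<ge> N" "k \<ge> N" for j k
    proof -
      have "c * L2_norm (\<lambda>x. f j x - f k x) \<le> L2_norm (\<lambda>x. b j x - b k x)"
        using lower[OF in_Hm_lincomb[OF Dn[of j] Dn[of k], where c="-1"]]
        unfolding f_def b_def opA_shift_lincomb by simp
      also have "\<dots> < e * c" using N that by blast
      finally show ?thesis using c by (simp add: mult.commute)
    qed
    then show ?thesis by blast
  qed
  then obtain F where LF: "L2 F" and fF: "(\<lambda>n. L2_norm (\<lambda>x. f n x - F x)) \<longlonglongrightarrow> 0"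
    using L2_Cauchy_convergent[of f, OF Lf] by blast
  obtain W where LW: "L2 W" and bW: "(\<lambda>n. L2_norm (\<lambda>x. b n x - W x)) \<longlonglongrightarrow> 0"
    using L2_Cauchy_convergent[of b, OF Lb] Cauchy unfolding b_def by blast
  obtain DF where DF: "in_Hm m DF" and BDF: "AE x in lborel. opA_shift a m t z DF x = W x"
    using opA_shift_closed_graph[OF Dn LF LW fF[unfolded f_def] bW[unfolded b_def]] by blast
  have LBD: "L2 (opA_shift a m t z DF)" by (rule L2_opA_shift[OF DF])
  have "AE x in lborel. b n x - opA_shift a m t z DF x = b n x - W x" for n
    using BDF by eventually_elim simp
  then have "L2_norm (\<lambda>x. b n x - opA_shift a m t z DF x) = L2_norm (\<lambda>x. b n x - W x)" for n
    by (intro L2_norm_cong_AE L2_diff Lb LBD LW)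
  then show ?thesis using that[OF DF] bW unfolding b_def by simp
qed

lemma opA_shift_best_approximation:
  assumes c: "c > 0"
    and lower: "\<And>Df. in_Hm m Df \<Longrightarrow> c * L2_norm (Df 0) \<le> L2_norm (opA_shift a m t z Df)"
    and y: "L2 y"
  obtains DF where "in_Hm m DF" "\<And>Dg. in_Hm m Dg \<Longrightarrow>
    L2_norm (\<lambda>x. y x - opA_shift a m t z DF x) \<le> L2_norm (\<lambda>x. y x - opA_shift a m t z Dg x)"
proof -
  let ?r = "\<lambda>Df. L2_norm (\<lambda>x. y x - opA_shift a m t z Df x)"
  obtain d Dn where d0: "0 \<le> d" and d_le: "\<And>Df. in_Hm m Df \<Longrightarrow> d \<le> ?r Df" and Dn: "\<And>n. in_Hm m (Dn n)"
    and small2: "\<And>n. (?r (Dn n))\<^sup>2 \<le> d\<^sup>2 + 1 / real (Suc n)" and lim_d: "(\<lambda>n. ?r (Dn n)) \<longlonglongrightarrow> d"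
    by (rule obtain_minimizing_sequence[where P="in_Hm m" and r="?r", OF in_Hm_zero L2_norm_nonneg]) blast
  have mid: "d \<le> L2_norm (\<lambda>x. y x - (opA_shift a m t z (Dn j) x + opA_shift a m t z (Dn k) x) / 2)" for j k
  proof -
    have "in_Hm m (\<lambda>i x. (1/2) * (Dn j i x + 1 * Dn k i x))"
      by (intro in_Hm_scale in_Hm_lincomb Dn)
    from d_le[OF this] show ?thesis
      unfolding opA_shift_scale opA_shift_lincomb by simp
  qed
  have "\<exists>N. \<forall>j\<ge>N. \<forall>k\<ge>N. L2_norm (\<lambda>x. opA_shift a m t z (Dn j) x - opA_shift a m t z (Dn k) x) < e"
    if "e > 0" for e
    using L2_minimizing_sequence_Cauchy[where b="\<lambda>n. opA_shift a m t z (Dn n)", OF L2_opA_shift[OF Dn] y d0 mid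
        small2 that] .
  then obtain DF where DF: "in_Hm m DF"
    and lim: "(\<lambda>n. L2_norm (\<lambda>x. opA_shift a m t z (Dn n) x - opA_shift a m t z DF x)) \<longlonglongrightarrow> 0"
    using opA_shift_closed_range[OF c lower, of Dn] Dn by blast
  have "(\<lambda>n. ?r (Dn n)) \<longlonglongrightarrow> ?r DF"
  proof (rule tendsto_L2_norm)
    show "(\<lambda>n. L2_norm (\<lambda>x. (y x - opA_shift a m t z (Dn n) x) - (y x - opA_shift a m t z DF x))) \<longlonglongrightarrow> 0"
      using lim L2_norm_commute[of "opA_shift a m t z DF"] by (simp add: algebra_simps)
  qed (intro L2_diff y L2_opA_shift Dn DF)+
  then have "?r DF = d" using lim_d LIMSEQ_unique by blast
  then show ?thesis using that[OF DF] d_le by simp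
qed

lemma opA_shift_minimizer_orthogonal:
  assumes DF: "in_Hm m DF" and y: "L2 y" and Dg: "in_Hm m Dg"
    and min: "\<And>Dh. in_Hm m Dh \<Longrightarrow>
      L2_norm (\<lambda>x. y x - opA_shift a m t z DF x) \<le> L2_norm (\<lambda>x. y x - opA_shift a m t z Dh x)"
  shows "L2_inner (\<lambda>x. y x - opA_shift a m t z DF x) (opA_shift a m t z Dg) = 0"
proof -
  define e where "e x = y x - opA_shift a m t z DF x" for x
  define w where "w = L2_inner e (opA_shift a m t z Dg)"
  define q where "q = L2_norm (opA_shift a m t z Dg)"
  have Le: "L2 e" unfolding e_def by (intro L2_diff y L2_opA_shift DF)
  define \<tau> :: real where "\<tau> = 1 / (q\<^sup>2 + 1)"
  have tau: "0 < \<tau>" "\<tau> * q\<^sup>2 < 1" unfolding \<tau>_def by (simp_all add: add_pos_nonneg field_simps)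
  define s where "s = complex_of_real \<tau> * w"
  have "L2_norm e \<le> L2_norm (\<lambda>x. y x - opA_shift a m t z (\<lambda>k x. DF k x + s * Dg k x) x)"
    unfolding e_def by (rule min[OF in_Hm_lincomb[OF DF Dg]])
  also have "(\<lambda>x. y x - opA_shift a m t z (\<lambda>k x. DF k x + s * Dg k x) x) = (\<lambda>x. e x + (- s) * opA_shift a m t z Dg x)"
    unfolding opA_shift_lincomb e_def by (auto simp: fun_eq_iff)
  finally have "(L2_norm e)\<^sup>2 \<le> (L2_norm (\<lambda>x. e x + (- s) * opA_shift a m t z Dg x))\<^sup>2"
    using L2_norm_nonneg by (intro power_mono) auto
  also have "\<dots> = (L2_norm e)\<^sup>2 + 2 * Re (cnj (- s) * w) + (cmod (- s))\<^sup>2 * q\<^sup>2"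
    unfolding w_def q_def by (rule L2_norm_add_scaled_square[OF Le L2_opA_shift[OF Dg]])
  also have "Re (cnj (- s) * w) = - \<tau> * (cmod w)\<^sup>2"
  proof -
    have "cnj (- s) * w = - complex_of_real \<tau> * (w * cnj w)" unfolding s_def by (simp add: algebra_simps)
    also have "\<dots> = complex_of_real (- \<tau> * (cmod w)\<^sup>2)"
      by (simp only: complex_norm_square[symmetric] of_real_mult of_real_minus)
    finally show ?thesis by simp
  qed
  also have "(cmod (- s))\<^sup>2 = \<tau>\<^sup>2 * (cmod w)\<^sup>2" unfolding s_def by (simp add: norm_mult power_mult_distrib)
  finally have "0 \<le> \<tau> * ((cmod w)\<^sup>2 * (\<tau> * q\<^sup>2 - 2))" by (simp add: algebra_simps power2_eq_square)
  then have "0 \<le> (cmod w)\<^sup>2 * (\<tau> * q\<^sup>2 - 2)" using tau(1) by (simp add: zero_le_mult_iff)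
  then have "(cmod w)\<^sup>2 \<le> 0" using tau(2) by (simp add: zero_le_mult_iff)
  then show ?thesis unfolding w_def e_def by simp
qed

text \<open>A vector orthogonal to the range of \<open>A - z\<close> lies in the domain of the adjoint and is
  annihilated by \<open>A - cnj z\<close>; the lower bound for \<open>A - cnj z\<close> then forces it to vanish.\<close>
lemma AE_zero_of_orthogonal_range:
  assumes c: "c > 0"
    and lower: "\<And>Df. in_Hm m Df \<Longrightarrow> c * L2_norm (Df 0) \<le> L2_norm (opA_shift a m t (cnj z) Df)"
    and e: "L2 e" and orth: "\<And>Dg. in_Hm m Dg \<Longrightarrow> L2_inner e (opA_shift a m t z Dg) = 0"
  shows "AE x in lborel. e x = 0"
proof -
  have orth': "L2_inner (opA_shift a m t z Dg) e = 0" if "in_Hm m Dg" for Dg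
    using orth[OF that] L2_inner_cnj[of "opA_shift a m t z Dg" e] by simp
  have "L2_inner (opA a m t Dg) e = L2_inner (Dg 0) (\<lambda>x. cnj z * e x)" if Dg: "in_Hm m Dg" for Dg
  proof -
    have "opA a m t Dg = (\<lambda>x. opA_shift a m t z Dg x + z * Dg 0 x)" unfolding opA_shift_def by auto
    then have "L2_inner (opA a m t Dg) e = L2_inner (opA_shift a m t z Dg) e + z * L2_inner (Dg 0) e"
      using L2_opA_shift[OF Dg] in_Hm_L2[OF Dg] e
      by (simp add: L2_inner_add_left L2_cmult L2_inner_scale_left)
    then show ?thesis using orth'[OF Dg] by (simp add: L2_inner_scale_right)
  qed
  then obtain De where De: "in_Hm m De" and De0: "De 0 = e"
    using in_Hm_of_adjoint[OF e L2_cmult[OF e]] by blast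
  have "AE x in lborel. opA_shift a m t (cnj z) De x = 0"
  proof (rule AE_zero_of_orthogonal_in_Hm[OF L2_opA_shift[OF De]])
    fix Dg assume "in_Hm m Dg"
    then show "L2_inner (Dg 0) (opA_shift a m t (cnj z) De) = 0"
      using opA_shift_symmetric[OF _ De, of Dg z] orth' De0 by simp
  qed
  then have "L2_norm (opA_shift a m t (cnj z) De) = 0"
    using L2_norm_zero_iff[OF L2_opA_shift[OF De]] by simp
  then have "L2_norm e = 0"
    using lower[OF De] De0 c L2_norm_nonneg[of e] by (simp add: mult_le_0_iff)
  then show ?thesis using L2_norm_zero_iff[OF e] by simp
qed

lemma opA_shift_surjective:
  assumes c: "c > 0"
    and lower: "\<And>Df. in_Hm m Df \<Longrightarrow> c * L2_norm (Df 0) \<le> L2_norm (opA_shift a m t z Df)"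
    and lower_cnj: "\<And>Df. in_Hm m Df \<Longrightarrow> c * L2_norm (Df 0) \<le> L2_norm (opA_shift a m t (cnj z) Df)"
    and y: "L2 y"
  obtains DF where "in_Hm m DF" "AE x in lborel. opA_shift a m t z DF x = y x"
proof -
  obtain DF where DF: "in_Hm m DF" and min: "\<And>Dg. in_Hm m Dg \<Longrightarrow>
      L2_norm (\<lambda>x. y x - opA_shift a m t z DF x) \<le> L2_norm (\<lambda>x. y x - opA_shift a m t z Dg x)"
    using opA_shift_best_approximation[OF c lower y] by blast
  have "AE x in lborel. y x - opA_shift a m t z DF x = 0"
    using AE_zero_of_orthogonal_range[OF c lower_cnj L2_diff[OF y L2_opA_shift[OF DF]]
        opA_shift_minimizer_orthogonal[OF DF y _ min]] .
  then have "AE x in lborel. opA_shift a m t z DF x = y x" by eventually_elim simp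
  with DF show ?thesis using that by blast
qed


lemma resolvent_set_op_iff:
  "z \<in> resolvent_set_op a m t \<longleftrightarrow>
     (\<forall>g. L2 g \<longrightarrow> (\<exists>Df. in_Hm m Df \<and> (AE x in lborel. opA_shift a m t z Df x = g x))) \<and>
     (\<exists>C. \<forall>Df. in_Hm m Df \<longrightarrow> L2_norm (Df 0) \<le> C * L2_norm (opA_shift a m t z Df))"
  unfolding resolvent_set_op_def opA_shift_def[abs_def] sobolev_iff_in_Hm by auto

lemma in_resolvent_setI:
  assumes c: "c > 0"
    and lower: "\<And>Df. in_Hm m Df \<Longrightarrow> c * L2_norm (Df 0) \<le> L2_norm (opA_shift a m t z Df)"
    and lower_cnj: "\<And>Df. in_Hm m Df \<Longrightarrow> c * L2_norm (Df 0) \<le> L2_norm (opA_shift a m t (cnj z) Df)"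
  shows "z \<in> resolvent_set_op a m t"
  unfolding resolvent_set_op_iff
proof (intro conjI allI impI)
  fix g assume "L2 g"
  then show "\<exists>Df. in_Hm m Df \<and> (AE x in lborel. opA_shift a m t z Df x = g x)"
    using opA_shift_surjective[OF c lower lower_cnj] by metis
next
  show "\<exists>C. \<forall>Df. in_Hm m Df \<longrightarrow> L2_norm (Df 0) \<le> C * L2_norm (opA_shift a m t z Df)"
    using lower c by (intro exI[of _ "1 / c"]) (simp add: field_simps)
qed

lemma nonreal_in_resolvent_set: "Im z \<noteq> 0 \<Longrightarrow> z \<in> resolvent_set_op a m t"
  by (rule in_resolvent_setI[of "\<bar>Im z\<bar>"])
     (use Im_le_norm_opA_shift[of _ z] Im_le_norm_opA_shift[of _ "cnj z"] in auto)

lemma in_spectrum_of_approx_eigenvectors: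
  assumes "\<And>e. e > 0 \<Longrightarrow> \<exists>Df. in_Hm m Df \<and> L2_norm (opA_shift a m t z Df) < e * L2_norm (Df 0)"
  shows "z \<in> spectrum_op a m t"
  unfolding spectrum_op_def
proof
  assume "z \<in> resolvent_set_op a m t"
  then obtain C where C: "\<And>Df. in_Hm m Df \<Longrightarrow> L2_norm (Df 0) \<le> C * L2_norm (opA_shift a m t z Df)"
    unfolding resolvent_set_op_iff by blast
  have "1 / (\<bar>C\<bar> + 1) > 0" by (simp add: add_pos_nonneg)
  then obtain Df where Df: "in_Hm m Df"
    and lt: "L2_norm (opA_shift a m t z Df) < (1 / (\<bar>C\<bar> + 1)) * L2_norm (Df 0)"
    using assms by blast
  have "L2_norm (Df 0) \<le> \<bar>C\<bar> * L2_norm (opA_shift a m t z Df)"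
    using C[OF Df] L2_norm_nonneg by (meson abs_ge_self mult_right_mono order_trans)
  also have "\<dots> \<le> \<bar>C\<bar> * ((1 / (\<bar>C\<bar> + 1)) * L2_norm (Df 0))"
    using lt by (intro mult_left_mono) auto
  finally have "L2_norm (Df 0) \<le> 0"
    by (simp add: field_simps)
  then have "L2_norm (Df 0) = 0" using L2_norm_nonneg[of "Df 0"] by linarith
  then show False using lt L2_norm_nonneg[of "opA_shift a m t z Df"] by simp
qed

text \<open>A point of the spectrum is an approximate eigenvalue: otherwise the lower
  bounds of \<open>in_resolvent_setI\<close> hold, \<open>cnj \<mu> = \<mu>\<close> because the spectrum is real.\<close>
lemma approx_eigenvectors_of_spectrum:
  assumes \<mu>: "\<mu> \<in> spectrum_op a m t" and e: "e > 0"
  obtains Df where "in_Hm m Df" "L2_norm (opA_shift a m t \<mu> Df) < e * L2_norm (Df 0)"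
proof -
  have "\<exists>Df. in_Hm m Df \<and> L2_norm (opA_shift a m t \<mu> Df) < e * L2_norm (Df 0)"
  proof (rule ccontr)
    assume none: "\<not> ?thesis"
    have lower: "e * L2_norm (Df 0) \<le> L2_norm (opA_shift a m t \<mu> Df)" if "in_Hm m Df" for Df
      using none that by (meson not_le)
    have "cnj \<mu> = \<mu>"
      using \<mu> nonreal_in_resolvent_set unfolding spectrum_op_def by (auto simp: complex_eq_iff)
    then have "\<mu> \<in> resolvent_set_op a m t" using in_resolvent_setI[OF e lower] lower by simp
    then show False using \<mu> unfolding spectrum_op_def by simp
  qed
  then show ?thesis using that by blast
qed

end

lemma in_Hm_nontrivial: obtains Df where "in_Hm m Df" "L2_norm (Df 0) > 0"
proof -
  define h where "h x = complex_of_real (indicator {0..1::real} x)" for x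
  have Lh: "L2 h" unfolding h_def by (rule L2_indicator_Icc)
  have "(L2_norm h)\<^sup>2 = (LINT x|lborel. (cmod (h x))\<^sup>2)" by (rule L2_norm_square_eq_integral[OF Lh])
  also have "(\<lambda>x. (cmod (h x))\<^sup>2) = (\<lambda>x. indicator {0..1::real} x)"
    unfolding h_def by (auto simp: fun_eq_iff indicator_def)
  also have "(LINT x|lborel. (indicator {0..1::real} x :: real)) = 1"
    by (simp only: Bochner_Integration.integral_indicator) simp
  finally have "\<not> (AE x in lborel. h x = 0)" using L2_norm_zero_iff[OF Lh] by auto
  then obtain Df where Df: "in_Hm m Df" and "L2_inner (Df 0) h \<noteq> 0"
    using AE_zero_of_orthogonal_sobolev[OF Lh, of m] unfolding sobolev_iff_in_Hm by blast
  then have "L2_norm (Df 0) \<noteq> 0"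
    using L2_Cauchy_Schwarz[OF in_Hm_L2[OF Df] Lh] by auto
  then show ?thesis using that[OF Df] L2_norm_nonneg[of "Df 0"] by simp
qed

text \<open>For real \<open>\<mu>\<close> in the resolvent set, an element \<open>v\<close> of \<open>unit_preimage\<close> is \<open>R h\<close> for a unit
  vector \<open>h = (A - \<mu>) v\<close>, where \<open>R = (A - \<mu>)\<^sup>-\<^sup>1\<close>. So \<open>resolvent_norm\<close> is the operator norm of \<open>R\<close>,
  \<open>resolvent_form v = \<langle>R h, h\<rangle>\<close>, and \<open>form_sup (\<plusminus>1)\<close> bounds the numerical range of \<open>\<plusminus>R\<close>.\<close>
locale real_resolvent_point = self_adjoint_opA +
  fixes \<mu> :: complex
  assumes real: "Im \<mu> = 0" and resolvent: "\<mu> \<in> resolvent_set_op a m t"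
begin

definition unit_preimage :: "(nat \<Rightarrow> real \<Rightarrow> complex) set" where
  "unit_preimage = {Dv. in_Hm m Dv \<and> L2_norm (opA_shift a m t \<mu> Dv) = 1}"

definition resolvent_norm :: real where
  "resolvent_norm = Sup ((\<lambda>Dv. L2_norm (Dv 0)) ` unit_preimage)"

definition resolvent_form :: "(nat \<Rightarrow> real \<Rightarrow> complex) \<Rightarrow> real" where
  "resolvent_form Dv = Re (L2_inner (Dv 0) (opA_shift a m t \<mu> Dv))"

definition form_sup :: "real \<Rightarrow> real" where
  "form_sup \<sigma> = Sup ((\<lambda>Dv. \<sigma> * resolvent_form Dv) ` unit_preimage)"

lemma resolvent_bound:
  obtains C where "\<And>Df. in_Hm m Df \<Longrightarrow> L2_norm (Df 0) \<le> C * L2_norm (opA_shift a m t \<mu> Df)"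
  using resolvent unfolding resolvent_set_op_iff by blast

lemma inner_eq_resolvent_form:
  "in_Hm m Dv \<Longrightarrow> L2_inner (Dv 0) (opA_shift a m t \<mu> Dv) = complex_of_real (resolvent_form Dv)"
  using Im_inner_opA_shift_self[OF _ real] unfolding resolvent_form_def by (simp add: complex_eq_iff)

lemma abs_resolvent_form_le:
  assumes "in_Hm m Dv"
  shows "\<bar>resolvent_form Dv\<bar> \<le> L2_norm (Dv 0) * L2_norm (opA_shift a m t \<mu> Dv)"
  unfolding resolvent_form_def
  by (rule order_trans[OF abs_Re_le_cmod L2_Cauchy_Schwarz[OF in_Hm_L2 L2_opA_shift]]) (use assms in auto)

lemma normalized_in_unit_preimage:
  assumes Dp: "in_Hm m Dp" and pos: "L2_norm (opA_shift a m t \<mu> Dp) > 0"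
  defines "s \<equiv> complex_of_real (1 / L2_norm (opA_shift a m t \<mu> Dp))"
  shows "(\<lambda>k x. s * Dp k x) \<in> unit_preimage"
    and "L2_norm (\<lambda>x. s * Dp 0 x) = L2_norm (Dp 0) / L2_norm (opA_shift a m t \<mu> Dp)"
    and "resolvent_form (\<lambda>k x. s * Dp k x) = resolvent_form Dp / (L2_norm (opA_shift a m t \<mu> Dp))\<^sup>2"
proof -
  let ?n = "L2_norm (opA_shift a m t \<mu> Dp)"
  have B: "opA_shift a m t \<mu> (\<lambda>k x. s * Dp k x) = (\<lambda>x. s * opA_shift a m t \<mu> Dp x)"
    by (rule opA_shift_scale)
  have "L2_norm (opA_shift a m t \<mu> (\<lambda>k x. s * Dp k x)) = 1"
    unfolding B L2_norm_scale using pos by (simp add: s_def norm_divide)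
  then show "(\<lambda>k x. s * Dp k x) \<in> unit_preimage"
    unfolding unit_preimage_def using in_Hm_scale[OF Dp, of s] by simp
  show "L2_norm (\<lambda>x. s * Dp 0 x) = L2_norm (Dp 0) / ?n"
    unfolding L2_norm_scale s_def using pos by (simp add: norm_divide)
  have "L2_inner (\<lambda>x. s * Dp 0 x) (\<lambda>x. s * opA_shift a m t \<mu> Dp x)
      = s * cnj s * L2_inner (Dp 0) (opA_shift a m t \<mu> Dp)"
    unfolding L2_inner_scale_left L2_inner_scale_right by (simp only: mult_ac)
  also have "\<dots> = complex_of_real (resolvent_form Dp / ?n\<^sup>2)"
    using inner_eq_resolvent_form[OF Dp] unfolding s_def by (simp add: power2_eq_square)
  finally show "resolvent_form (\<lambda>k x. s * Dp k x) = resolvent_form Dp / ?n\<^sup>2"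
    unfolding resolvent_form_def B by simp
qed

lemma exists_normalized:
  assumes "in_Hm m Dp" "L2_norm (opA_shift a m t \<mu> Dp) > 0"
  obtains Dq where "Dq \<in> unit_preimage"
    "L2_norm (Dq 0) = L2_norm (Dp 0) / L2_norm (opA_shift a m t \<mu> Dp)"
    "resolvent_form Dq = resolvent_form Dp / (L2_norm (opA_shift a m t \<mu> Dp))\<^sup>2"
  using normalized_in_unit_preimage[OF assms] by blast

lemma unit_preimage_bounded:
  obtains C where "\<And>Dv. Dv \<in> unit_preimage \<Longrightarrow> L2_norm (Dv 0) \<le> C"
proof -
  obtain C where "\<And>Df. in_Hm m Df \<Longrightarrow> L2_norm (Df 0) \<le> C * L2_norm (opA_shift a m t \<mu> Df)"
    using resolvent_bound by blast
  then show ?thesis using that[of C] unfolding unit_preimage_def by force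
qed

lemma unit_preimage_nontrivial:
  obtains Dv where "Dv \<in> unit_preimage" "L2_norm (Dv 0) > 0"
proof -
  obtain C where C: "\<And>Df. in_Hm m Df \<Longrightarrow> L2_norm (Df 0) \<le> C * L2_norm (opA_shift a m t \<mu> Df)"
    using resolvent_bound by blast
  obtain Df where Df: "in_Hm m Df" and pos: "L2_norm (Df 0) > 0" by (rule in_Hm_nontrivial)
  have "L2_norm (opA_shift a m t \<mu> Df) \<noteq> 0" using C[OF Df] pos by auto
  then have "L2_norm (opA_shift a m t \<mu> Df) > 0" using L2_norm_nonneg less_eq_real_def by metis
  with Df pos show ?thesis using exists_normalized that by (metis divide_pos_pos)
qed

lemma le_resolvent_norm: "Dv \<in> unit_preimage \<Longrightarrow> L2_norm (Dv 0) \<le> resolvent_norm"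
  unfolding resolvent_norm_def using unit_preimage_bounded
  by (metis (mono_tags, lifting) bdd_aboveI2 cSup_upper imageI)

lemma resolvent_norm_pos: "resolvent_norm > 0"
  using unit_preimage_nontrivial le_resolvent_norm by (metis less_le_trans)

lemma norm_le_resolvent_norm:
  assumes Dg: "in_Hm m Dg"
  shows "L2_norm (Dg 0) \<le> resolvent_norm * L2_norm (opA_shift a m t \<mu> Dg)"
proof (cases "L2_norm (opA_shift a m t \<mu> Dg) = 0")
  case True
  obtain C where "\<And>Df. in_Hm m Df \<Longrightarrow> L2_norm (Df 0) \<le> C * L2_norm (opA_shift a m t \<mu> Df)"
    using resolvent_bound by blast
  then show ?thesis using Dg True by fastforce
next
  case False
  then have pos: "L2_norm (opA_shift a m t \<mu> Dg) > 0" using L2_norm_nonneg less_eq_real_def by metis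
  then obtain Dq where Dq: "Dq \<in> unit_preimage"
    and eq: "L2_norm (Dq 0) = L2_norm (Dg 0) / L2_norm (opA_shift a m t \<mu> Dg)"
    using exists_normalized[OF Dg] by blast
  have "L2_norm (Dg 0) = L2_norm (Dq 0) * L2_norm (opA_shift a m t \<mu> Dg)"
    using eq pos by simp
  also have "\<dots> \<le> resolvent_norm * L2_norm (opA_shift a m t \<mu> Dg)"
    using le_resolvent_norm[OF Dq] pos by (simp add: mult_right_mono)
  finally show ?thesis .
qed

lemma resolvent_form_le_norm: "Dv \<in> unit_preimage \<Longrightarrow> \<bar>resolvent_form Dv\<bar> \<le> L2_norm (Dv 0)"
  using abs_resolvent_form_le unfolding unit_preimage_def by fastforce

lemma
  assumes \<sigma>: "\<sigma> = 1 \<or> \<sigma> = -1"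
  shows le_form_sup: "Dv \<in> unit_preimage \<Longrightarrow> \<sigma> * resolvent_form Dv \<le> form_sup \<sigma>"
    and form_sup_le_resolvent_norm: "form_sup \<sigma> \<le> resolvent_norm"
proof -
  have le: "\<sigma> * resolvent_form Dv \<le> L2_norm (Dv 0)" if "Dv \<in> unit_preimage" for Dv
    using resolvent_form_le_norm[OF that] \<sigma> by auto
  obtain C where "\<And>Dv. Dv \<in> unit_preimage \<Longrightarrow> L2_norm (Dv 0) \<le> C"
    using unit_preimage_bounded by blast
  then have "bdd_above ((\<lambda>Dv. \<sigma> * resolvent_form Dv) ` unit_preimage)"
    using le by (meson bdd_aboveI2 order_trans)
  then show "Dv \<in> unit_preimage \<Longrightarrow> \<sigma> * resolvent_form Dv \<le> form_sup \<sigma>"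
    unfolding form_sup_def by (intro cSup_upper imageI)
  show "form_sup \<sigma> \<le> resolvent_norm"
    unfolding form_sup_def using unit_preimage_nontrivial le le_resolvent_norm
    by (intro cSup_least) (blast, fastforce intro: order_trans)
qed

lemma le_form_sup_scaled:
  assumes \<sigma>: "\<sigma> = 1 \<or> \<sigma> = -1" and Dp: "in_Hm m Dp"
  shows "\<sigma> * resolvent_form Dp \<le> form_sup \<sigma> * (L2_norm (opA_shift a m t \<mu> Dp))\<^sup>2"
proof (cases "L2_norm (opA_shift a m t \<mu> Dp) = 0")
  case True
  then show ?thesis using abs_resolvent_form_le[OF Dp] by simp
next
  case False
  then have pos: "L2_norm (opA_shift a m t \<mu> Dp) > 0" using L2_norm_nonneg less_eq_real_def by metis
  then obtain Dq where Dq: "Dq \<in> unit_preimage"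
      and eq: "resolvent_form Dq = resolvent_form Dp / (L2_norm (opA_shift a m t \<mu> Dp))\<^sup>2"
    using exists_normalized[OF Dp] by blast
  have "\<sigma> * resolvent_form Dq \<le> form_sup \<sigma>" by (rule le_form_sup[OF \<sigma> Dq])
  then show ?thesis using pos unfolding eq by (simp add: field_simps)
qed

text \<open>The norm of the self-adjoint operator \<open>R\<close> is its numerical radius. Polarisation: for
  \<open>v = R h\<close> with \<open>\<parallel>h\<parallel> = 1\<close> and \<open>k = v / \<parallel>v\<parallel>\<close>,
  \<open>\<langle>R(h + k), h + k\<rangle> - \<langle>R(h - k), h - k\<rangle> = 4 \<parallel>v\<parallel>\<close>, while \<open>\<parallel>h + k\<parallel>\<^sup>2 + \<parallel>h - k\<parallel>\<^sup>2 = 4\<close>.\<close>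
lemma polarization_partner:
  assumes vU: "Dv \<in> unit_preimage" and pos: "L2_norm (Dv 0) > 0"
  obtains Dx where "Dx \<in> unit_preimage"
    "L2_inner (Dv 0) (opA_shift a m t \<mu> Dx) = complex_of_real (L2_norm (Dv 0))"
    "L2_inner (Dx 0) (opA_shift a m t \<mu> Dv) = complex_of_real (L2_norm (Dv 0))"
proof -
  define r where "r = L2_norm (Dv 0)"
  have Dv: "in_Hm m Dv" and nBv: "L2_norm (opA_shift a m t \<mu> Dv) = 1"
    using vU unfolding unit_preimage_def by auto
  have rpos: "r > 0" using pos unfolding r_def .
  have Lv: "L2 (Dv 0)" by (rule in_Hm_L2[OF Dv])
  have Lk: "L2 (\<lambda>x. complex_of_real (1 / r) * Dv 0 x)" by (rule L2_cmult[OF Lv])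
  obtain Dx where Dx: "in_Hm m Dx"
    and BDx: "AE x in lborel. opA_shift a m t \<mu> Dx x = complex_of_real (1 / r) * Dv 0 x"
    using resolvent Lk unfolding resolvent_set_op_iff by blast
  have LBx: "L2 (opA_shift a m t \<mu> Dx)" by (rule L2_opA_shift[OF Dx])
  have vv: "L2_inner (Dv 0) (Dv 0) = complex_of_real (r\<^sup>2)"
    unfolding r_def by (rule L2_inner_self[OF Lv])
  have i1: "L2_inner (Dv 0) (opA_shift a m t \<mu> Dx) = complex_of_real r"
  proof -
    have "L2_inner (Dv 0) (opA_shift a m t \<mu> Dx) = L2_inner (Dv 0) (\<lambda>x. complex_of_real (1 / r) * Dv 0 x)"
      by (rule L2_inner_cong_AE_right[OF LBx Lk Lv BDx])
    also have "\<dots> = complex_of_real r"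
      unfolding L2_inner_scale_right vv using rpos by (simp add: power2_eq_square)
    finally show ?thesis .
  qed
  have i2: "L2_inner (Dx 0) (opA_shift a m t \<mu> Dv) = complex_of_real r"
  proof -
    have "cnj \<mu> = \<mu>" using real by (simp add: complex_eq_iff)
    then have "L2_inner (Dx 0) (opA_shift a m t \<mu> Dv) = L2_inner (opA_shift a m t \<mu> Dx) (Dv 0)"
      using opA_shift_symmetric[OF Dx Dv, of \<mu>] by simp
    also have "\<dots> = L2_inner (\<lambda>x. complex_of_real (1 / r) * Dv 0 x) (Dv 0)"
      by (rule L2_inner_cong_AE_left[OF LBx Lk Lv BDx])
    also have "\<dots> = complex_of_real r"
      unfolding L2_inner_scale_left vv using rpos by (simp add: power2_eq_square)
    finally show ?thesis .
  qed
  have nBx: "L2_norm (opA_shift a m t \<mu> Dx) = 1"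
  proof -
    have "L2_norm (opA_shift a m t \<mu> Dx) = L2_norm (\<lambda>x. complex_of_real (1 / r) * Dv 0 x)"
      by (rule L2_norm_cong_AE[OF LBx Lk BDx])
    also have "\<dots> = 1" using rpos unfolding L2_norm_scale r_def by (simp add: norm_divide)
    finally show ?thesis .
  qed
  show ?thesis using that[of Dx] Dx nBx i1 i2 unfolding unit_preimage_def r_def by blast
qed

lemma norm_le_max_form_sup:
  assumes vU: "Dv \<in> unit_preimage"
  shows "L2_norm (Dv 0) \<le> max (form_sup 1) (form_sup (-1))"
proof (cases "L2_norm (Dv 0) = 0")
  case True
  then show ?thesis using le_form_sup[of 1 Dv] le_form_sup[of "-1" Dv] vU by auto
next
  case False
  define r where "r = L2_norm (Dv 0)"
  have "r > 0" using False L2_norm_nonneg[of "Dv 0"] unfolding r_def by simp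
  then obtain Dx where xU: "Dx \<in> unit_preimage"
    and i1: "L2_inner (Dv 0) (opA_shift a m t \<mu> Dx) = complex_of_real r"
    and i2: "L2_inner (Dx 0) (opA_shift a m t \<mu> Dv) = complex_of_real r"
    using polarization_partner[OF vU] unfolding r_def by blast
  have Dv: "in_Hm m Dv" and nBv: "L2_norm (opA_shift a m t \<mu> Dv) = 1"
    and Dx: "in_Hm m Dx" and nBx: "L2_norm (opA_shift a m t \<mu> Dx) = 1"
    using vU xU unfolding unit_preimage_def by auto
  have Lv: "L2 (Dv 0)" and Lx: "L2 (Dx 0)" using Dv Dx by (simp_all add: in_Hm_L2)
  have LBv: "L2 (opA_shift a m t \<mu> Dv)" and LBx: "L2 (opA_shift a m t \<mu> Dx)"
    using Dv Dx by (simp_all add: L2_opA_shift)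
  define Dp where "Dp = (\<lambda>k x. Dv k x + 1 * Dx k x)"
  define Dn where "Dn = (\<lambda>k x. Dv k x + (-1) * Dx k x)"
  have Dp: "in_Hm m Dp" and Dn: "in_Hm m Dn" unfolding Dp_def Dn_def by (intro in_Hm_lincomb Dv Dx)+
  have BDp: "opA_shift a m t \<mu> Dp = (\<lambda>x. opA_shift a m t \<mu> Dv x + opA_shift a m t \<mu> Dx x)"
    and BDn: "opA_shift a m t \<mu> Dn = (\<lambda>x. opA_shift a m t \<mu> Dv x - opA_shift a m t \<mu> Dx x)"
    unfolding Dp_def Dn_def opA_shift_lincomb by simp_all
  have "L2_inner (Dp 0) (opA_shift a m t \<mu> Dp) - L2_inner (Dn 0) (opA_shift a m t \<mu> Dn)
      = 2 * (L2_inner (Dv 0) (opA_shift a m t \<mu> Dx) + L2_inner (Dx 0) (opA_shift a m t \<mu> Dv))"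
    unfolding BDp BDn using Lv Lx LBv LBx
    by (simp add: Dp_def Dn_def L2_inner_add_left L2_inner_add_right L2_inner_diff_left
        L2_inner_diff_right L2_add L2_diff)
  then have "complex_of_real (resolvent_form Dp - resolvent_form Dn) = complex_of_real (4 * r)"
    unfolding i1 i2 inner_eq_resolvent_form[OF Dp] inner_eq_resolvent_form[OF Dn] by simp
  then have diff: "resolvent_form Dp - resolvent_form Dn = 4 * r"
    by (simp only: of_real_eq_iff)
  have par: "(L2_norm (opA_shift a m t \<mu> Dn))\<^sup>2 + (L2_norm (opA_shift a m t \<mu> Dp))\<^sup>2 = 4"
    using L2_parallelogram[OF LBv LBx] nBv nBx unfolding BDp BDn by simp
  let ?M = "max (form_sup 1) (form_sup (-1))"
  have "resolvent_form Dp \<le> ?M * (L2_norm (opA_shift a m t \<mu> Dp))\<^sup>2"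
    using le_form_sup_scaled[of 1 Dp] Dp by (simp add: mult_right_mono order_trans)
  moreover have "- resolvent_form Dn \<le> ?M * (L2_norm (opA_shift a m t \<mu> Dn))\<^sup>2"
    using le_form_sup_scaled[of "-1" Dn] Dn by (simp add: mult_right_mono order_trans)
  moreover have "?M * (L2_norm (opA_shift a m t \<mu> Dp))\<^sup>2 + ?M * (L2_norm (opA_shift a m t \<mu> Dn))\<^sup>2 = ?M * 4"
    using par by (simp add: distrib_left[symmetric] add.commute)
  ultimately have "4 * r \<le> ?M * 4"
    using diff by linarith
  then show ?thesis unfolding r_def by simp
qed

lemma form_sup_eq_resolvent_norm:
  obtains \<sigma> where "\<sigma> = 1 \<or> \<sigma> = -1" "form_sup \<sigma> = resolvent_norm"
proof -
  have "resolvent_norm \<le> max (form_sup 1) (form_sup (-1))"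
    unfolding resolvent_norm_def using unit_preimage_nontrivial norm_le_max_form_sup
    by (intro cSup_least) blast+
  then show ?thesis
    using that form_sup_le_resolvent_norm[of 1] form_sup_le_resolvent_norm[of "-1"]
    by (metis max_def order_antisym)
qed

text \<open>Where the numerical radius is attained, \<open>\<sigma> resolvent_norm\<close> is an approximate eigenvalue
  of \<open>R\<close>, hence \<open>\<mu> + \<sigma> / resolvent_norm\<close> one of \<open>A\<close>: for \<open>v\<close> in \<open>unit_preimage\<close> with
  \<open>\<sigma> resolvent_form v > N - \<epsilon>\<close>, expanding the square gives
  \<open>\<parallel>(A - \<mu> - \<sigma>/N) v\<parallel>\<^sup>2 \<le> 2 \<epsilon> / N\<close> while \<open>\<parallel>v\<parallel> > N - \<epsilon>\<close>.\<close>
lemma norm_opA_shift_perturbed_square: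
  assumes vU: "v \<in> unit_preimage" and \<sigma>: "\<sigma> = 1 \<or> \<sigma> = -1"
  shows "(L2_norm (opA_shift a m t (\<mu> + complex_of_real (\<sigma> / N)) v))\<^sup>2
    = 1 - 2 * (\<sigma> * resolvent_form v) / N + (L2_norm (v 0))\<^sup>2 / N\<^sup>2"
proof -
  have Dv: "in_Hm m v" and nBv: "L2_norm (opA_shift a m t \<mu> v) = 1"
    using vU unfolding unit_preimage_def by auto
  have Lv: "L2 (v 0)" by (rule in_Hm_L2[OF Dv])
  have LBv: "L2 (opA_shift a m t \<mu> v)" by (rule L2_opA_shift[OF Dv])
  have shift: "opA_shift a m t (\<mu> + complex_of_real (\<sigma> / N)) v
      = (\<lambda>x. opA_shift a m t \<mu> v x + (- complex_of_real (\<sigma> / N)) * v 0 x)"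
    unfolding opA_shift_def by (auto simp: algebra_simps)
  have Re1: "Re (L2_inner (opA_shift a m t \<mu> v) (v 0)) = resolvent_form v"
    unfolding resolvent_form_def using L2_inner_cnj[of "opA_shift a m t \<mu> v" "v 0"] by simp
  show ?thesis
    unfolding shift L2_norm_add_scaled_square[OF LBv Lv] nBv Re1[symmetric] using \<sigma>
    by (auto simp: power_divide norm_divide)
qed

lemma in_spectrum_at_resolvent_norm:
  assumes \<sigma>: "\<sigma> = 1 \<or> \<sigma> = -1" and attained: "form_sup \<sigma> = resolvent_norm"
  shows "\<mu> + complex_of_real (\<sigma> / resolvent_norm) \<in> spectrum_op a m t"
proof (rule in_spectrum_of_approx_eigenvectors)
  fix e :: real assume e: "e > 0"
  define N where "N = resolvent_norm"
  have Npos: "N > 0" unfolding N_def by (rule resolvent_norm_pos)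
  define \<epsilon> where "\<epsilon> = min (N / 2) (e\<^sup>2 * N ^ 3 / 16)"
  have eps: "\<epsilon> > 0" "\<epsilon> \<le> N / 2" "\<epsilon> \<le> e\<^sup>2 * N ^ 3 / 16" unfolding \<epsilon>_def using Npos e by auto
  have "N - \<epsilon> < Sup ((\<lambda>Dv. \<sigma> * resolvent_form Dv) ` unit_preimage)"
    using attained eps unfolding form_sup_def N_def by simp
  then obtain v where vU: "v \<in> unit_preimage" and vq: "N - \<epsilon> < \<sigma> * resolvent_form v"
    using less_cSupD[of "(\<lambda>Dv. \<sigma> * resolvent_form Dv) ` unit_preimage"] unit_preimage_nontrivial by blast
  have Dv: "in_Hm m v" using vU unfolding unit_preimage_def by auto
  have rv: "L2_norm (v 0) \<le> N" unfolding N_def by (rule le_resolvent_norm[OF vU])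
  have rvq: "N - \<epsilon> < L2_norm (v 0)"
    using vq resolvent_form_le_norm[OF vU] \<sigma> by auto
  have "(L2_norm (opA_shift a m t (\<mu> + complex_of_real (\<sigma> / N)) v))\<^sup>2
      = 1 - 2 * (\<sigma> * resolvent_form v) / N + (L2_norm (v 0))\<^sup>2 / N\<^sup>2"
    using norm_opA_shift_perturbed_square[OF vU \<sigma>] by simp
  also have "\<dots> < 2 * \<epsilon> / N"
  proof -
    have "(L2_norm (v 0))\<^sup>2 / N\<^sup>2 \<le> 1" using rv Npos rvq eps by (simp add: field_simps power_mono)
    moreover have "2 * (\<sigma> * resolvent_form v) / N > 2 * (N - \<epsilon>) / N"
      using vq Npos by (simp add: divide_strict_right_mono)
    moreover have "1 - 2 * (N - \<epsilon>) / N + 1 = 2 * \<epsilon> / N" using Npos by (simp add: field_simps)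
    ultimately show ?thesis by linarith
  qed
  also have "\<dots> \<le> (e * (N / 2))\<^sup>2 / 2"
    using eps(3) Npos by (simp add: field_simps power2_eq_square power3_eq_cube)
  also have "\<dots> < (e * L2_norm (v 0))\<^sup>2"
  proof -
    have "N / 2 \<le> L2_norm (v 0)" using rvq eps by linarith
    then have "(e * (N / 2))\<^sup>2 \<le> (e * L2_norm (v 0))\<^sup>2" using e Npos by (intro power_mono mult_left_mono) auto
    moreover have "0 < (e * (N / 2))\<^sup>2" using e Npos by simp
    ultimately show ?thesis by linarith
  qed
  finally have "L2_norm (opA_shift a m t (\<mu> + complex_of_real (\<sigma> / N)) v) < e * L2_norm (v 0)"
    using e L2_norm_nonneg[of "v 0"] by (meson mult_nonneg_nonneg less_le power_less_imp_less_base)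
  then show "\<exists>Df. in_Hm m Df \<and>
      L2_norm (opA_shift a m t (\<mu> + complex_of_real (\<sigma> / resolvent_norm)) Df) < e * L2_norm (Df 0)"
    using Dv unfolding N_def by blast
qed


end

context self_adjoint_opA
begin

lemma spectrum_near_approx_eigenvalue:
  assumes real: "Im \<mu> = 0" and Dg: "in_Hm m Dg"
    and small: "L2_norm (opA_shift a m t \<mu> Dg) < \<delta> * L2_norm (Dg 0)"
  obtains l where "l \<in> spectrum_op a m t" "cmod (l - \<mu>) < \<delta>"
proof (cases "\<mu> \<in> spectrum_op a m t")
  case True
  have "0 < \<delta> * L2_norm (Dg 0)" using small L2_norm_nonneg[of "opA_shift a m t \<mu> Dg"] by linarith
  then have "\<delta> > 0" using L2_norm_nonneg[of "Dg 0"] by (simp add: zero_less_mult_iff)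
  then show ?thesis using that[OF True] by simp
next
  case False
  interpret real_resolvent_point m a t \<mu>
    using False real unfolding spectrum_op_def
    by (intro real_resolvent_point.intro self_adjoint_opA_axioms real_resolvent_point_axioms.intro) auto
  obtain \<sigma> where \<sigma>: "\<sigma> = 1 \<or> \<sigma> = -1" and attained: "form_sup \<sigma> = resolvent_norm"
    by (rule form_sup_eq_resolvent_norm)
  have N: "resolvent_norm > 0" by (rule resolvent_norm_pos)
  have "L2_norm (Dg 0) \<le> resolvent_norm * L2_norm (opA_shift a m t \<mu> Dg)"
    by (rule norm_le_resolvent_norm[OF Dg])
  also have "\<dots> < resolvent_norm * (\<delta> * L2_norm (Dg 0))"
    using small N by simp
  finally have lt: "1 * L2_norm (Dg 0) < (resolvent_norm * \<delta>) * L2_norm (Dg 0)"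
    by (simp add: mult.assoc)
  then have "1 < resolvent_norm * \<delta>"
    using L2_norm_nonneg[of "Dg 0"] by (meson mult_less_cancel_right not_le)
  then have "1 / resolvent_norm < \<delta>"
    using N by (simp add: field_simps)
  moreover have "cmod (complex_of_real (\<sigma> / resolvent_norm)) = 1 / resolvent_norm"
    using \<sigma> N by (auto simp: norm_divide)
  ultimately show ?thesis
    using that in_spectrum_at_resolvent_norm[OF \<sigma> attained] by (metis add_diff_cancel_left')
qed

lemma spectrum_op_nonempty: "spectrum_op a m t \<noteq> {}"
proof
  assume empty: "spectrum_op a m t = {}"
  interpret real_resolvent_point m a t 0
    using empty unfolding spectrum_op_def
    by (intro real_resolvent_point.intro self_adjoint_opA_axioms real_resolvent_point_axioms.intro) auto
  obtain \<sigma> where "\<sigma> = 1 \<or> \<sigma> = -1" "form_sup \<sigma> = resolvent_norm"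
    by (rule form_sup_eq_resolvent_norm)
  then show False using in_spectrum_at_resolvent_norm empty by blast
qed

end

section \<open>Spectral inclusion\<close>

lemma tendsto_selection_of_eventually_near:
  fixes S :: "nat \<Rightarrow> 'a::metric_space set"
  assumes ne: "\<And>n. S n \<noteq> {}"
    and near: "\<And>e. e > 0 \<Longrightarrow> eventually (\<lambda>n. \<exists>y\<in>S n. dist y x < e) sequentially"
  obtains l where "\<And>n. l n \<in> S n" "l \<longlonglongrightarrow> x"
proof -
  have "\<exists>y\<in>S n. dist x y < infdist x (S n) + 1 / real (Suc n)" for n
  proof -
    have "(INF y\<in>S n. dist x y) < infdist x (S n) + 1 / real (Suc n)"
      unfolding infdist_notempty[OF ne[of n], symmetric] by simp
    then show ?thesis using cInf_lessD[of "(\<lambda>y. dist x y) ` S n"] ne[of n] by blast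
  qed
  then obtain l where l: "\<And>n. l n \<in> S n" and close: "\<And>n. dist x (l n) < infdist x (S n) + 1 / real (Suc n)"
    by metis
  have "eventually (\<lambda>n. dist (l n) x < e) sequentially" if e: "e > 0" for e
  proof -
    have "eventually (\<lambda>n. \<exists>y\<in>S n. dist y x < e / 2) sequentially"
      using e by (intro near) simp
    then have "eventually (\<lambda>n. infdist x (S n) < e / 2) sequentially"
      by (rule eventually_mono) (metis dist_commute infdist_le le_less_trans)
    moreover have "eventually (\<lambda>n. 1 / real (Suc n) < e / 2) sequentially"
      using e by (intro order_tendstoD(2)[OF LIMSEQ_Suc[OF lim_const_over_n[of 1, unfolded of_nat_Suc]]]) simp
    ultimately show ?thesis
    proof eventually_elim
      case (elim n)
      then show ?case using close[of n] dist_commute[of "l n" x] by linarith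
    qed
  qed
  then show ?thesis using that[OF l] by (simp add: tendstoI)
qed

lemma self_adjoint_opAI:
  assumes "\<And>k. k \<le> m \<Longrightarrow> continuous_on UNIV (a k)" "\<And>k p. k \<le> m \<Longrightarrow> cmod (a k p) \<le> M"
    and "self_adjoint_op a m t"
  shows "self_adjoint_opA m a t"
  using assms L2_opA by (unfold_locales) blast+

lemma spectrum_op_eventually_near:
  assumes cont: "\<And>k. k \<le> m \<Longrightarrow> continuous_on UNIV (a k)"
    and bound: "\<And>k p. k \<le> m \<Longrightarrow> cmod (a k p) \<le> M"
    and selfadj: "\<And>t. self_adjoint_op a m t" and conv: "\<theta>s \<longlonglongrightarrow> \<theta>"
    and \<mu>: "\<mu> \<in> spectrum_op a m \<theta>" and e: "e > 0"
  shows "eventually (\<lambda>n. \<exists>l\<in>spectrum_op a m (\<theta>s n). dist l \<mu> < e) sequentially"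
proof -
  have A: "self_adjoint_opA m a t" for t by (rule self_adjoint_opAI[OF cont bound selfadj])
  have real: "Im \<mu> = 0"
    using \<mu> self_adjoint_opA.nonreal_in_resolvent_set[OF A] unfolding spectrum_op_def by blast
  obtain Df where Df: "in_Hm m Df" and small: "L2_norm (opA_shift a m \<theta> \<mu> Df) < e * L2_norm (Df 0)"
    using self_adjoint_opA.approx_eigenvectors_of_spectrum[OF A \<mu> e] by blast
  have "(\<lambda>n. L2_norm (opA_shift a m (\<theta>s n) \<mu> Df)) \<longlonglongrightarrow> L2_norm (opA_shift a m \<theta> \<mu> Df)"
  proof (rule tendsto_L2_norm[OF self_adjoint_opA.L2_opA_shift[OF A Df] self_adjoint_opA.L2_opA_shift[OF A Df]])
    have "L2_norm (\<lambda>x. opA_shift a m (\<theta>s n) \<mu> Df x - opA_shift a m \<theta> \<mu> Df x)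
        = L2_norm (\<lambda>x. opA a m \<theta> Df x - opA a m (\<theta>s n) Df x)" for n
      using L2_norm_commute[of "opA a m \<theta> Df"] unfolding opA_shift_def by simp
    then show "(\<lambda>n. L2_norm (\<lambda>x. opA_shift a m (\<theta>s n) \<mu> Df x - opA_shift a m \<theta> \<mu> Df x)) \<longlonglongrightarrow> 0"
      using opA_strong_convergence[OF cont bound _ conv] Df unfolding in_Hm_def by simp
  qed
  then have "eventually (\<lambda>n. L2_norm (opA_shift a m (\<theta>s n) \<mu> Df) < e * L2_norm (Df 0)) sequentially"
    using small by (rule order_tendstoD(2))
  then show ?thesis
  proof (rule eventually_mono)
    fix n assume "L2_norm (opA_shift a m (\<theta>s n) \<mu> Df) < e * L2_norm (Df 0)"
    then obtain l where "l \<in> spectrum_op a m (\<theta>s n)" "cmod (l - \<mu>) < e"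
      using self_adjoint_opA.spectrum_near_approx_eigenvalue[OF A real Df] by blast
    then show "\<exists>l\<in>spectrum_op a m (\<theta>s n). dist l \<mu> < e" by (auto simp: dist_norm)
  qed
qed

theorem proposition3p1:
  fixes m :: nat
    and a :: "nat \<Rightarrow> real \<times> real \<Rightarrow> complex"
    and \<theta> :: real
    and \<theta>s :: "nat \<Rightarrow> real"
  assumes coeffs: "\<And>k. k \<le> m \<Longrightarrow> smooth_bounded_periodic (a k)"
    and selfadj: "\<And>t. self_adjoint_op a m t"
    and ell: "elliptic_op a m"
    and conv: "\<theta>s \<longlonglongrightarrow> \<theta>"
  shows "(\<forall>f Df. sobolev m f Df \<longrightarrow>
            (\<lambda>n. L2_norm (\<lambda>x. opA a m \<theta> Df x - opA a m (\<theta>s n) Df x)) \<longlonglongrightarrow> 0)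
       \<and> (\<forall>\<mu>\<in>spectrum_op a m \<theta>. \<exists>l. (\<forall>n. l n \<in> spectrum_op a m (\<theta>s n)) \<and> l \<longlonglongrightarrow> \<mu>)"
proof (intro conjI allI impI ballI)
  have cont: "\<And>k. k \<le> m \<Longrightarrow> continuous_on UNIV (a k)"
    using coeffs smooth_bounded_periodic_continuous by blast
  obtain M where bound: "\<And>k p. k \<le> m \<Longrightarrow> cmod (a k p) \<le> M"
    using smooth_bounded_periodic_bounded[of m a] coeffs by blast
  show "(\<lambda>n. L2_norm (\<lambda>x. opA a m \<theta> Df x - opA a m (\<theta>s n) Df x)) \<longlonglongrightarrow> 0" if "sobolev m f Df" for f Df
    by (rule opA_strong_convergence[OF cont bound that conv])
  fix \<mu> assume \<mu>: "\<mu> \<in> spectrum_op a m \<theta>"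
  have "spectrum_op a m (\<theta>s n) \<noteq> {}" for n
    by (rule self_adjoint_opA.spectrum_op_nonempty[OF self_adjoint_opAI[OF cont bound selfadj]])
  moreover have "eventually (\<lambda>n. \<exists>l\<in>spectrum_op a m (\<theta>s n). dist l \<mu> < e) sequentially" if "e > 0" for e
    by (rule spectrum_op_eventually_near[OF cont bound selfadj conv \<mu> that])
  ultimately show "\<exists>l. (\<forall>n. l n \<in> spectrum_op a m (\<theta>s n)) \<and> l \<longlonglongrightarrow> \<mu>"
    using tendsto_selection_of_eventually_near[of "\<lambda>n. spectrum_op a m (\<theta>s n)" \<mu>] by blast
qed

end
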